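(* Let $m\ge 1$ and $n\ge 0$ be integers. The multiplicity of $-n$ as an eigenvalue of ${\rm SR}(m,n)$ equals the number of permutations in the symmetric group ${\rm Sym}(m)$ with exactly $n$ inversions, that is, the coefficient of $t^n$ in $\prod_{i=2}^m (1+t+\cdots+t^{i-1})$.
   Context: ${\rm SR}(m,n)$ is the graph whose vertices are the vectors in $\{0,1,2,\dots\}^m$ with coordinate sum $n$, two vertices being adjacent when they differ in precisely two coordinate positions; eigenvalues are those of the adjacency matrix, and the multiplicity of a non-eigenvalue is $0$. An inversion of $\pi\in{\rm Sym}(m)$ is a pair $i<j$ with $\pi(i)>\pi(j)$. *)

theory Defs
  imports "Jordan_Normal_Form.Char_Poly" "HOL-Combinatorics.Permutations"
begin

text \<open>Vertices of SR(m,n): vectors in nat^m (as lists of length m) with coordinate sum n,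
  enumerated (without repetition) by the list below.\<close>

fun sr_vertex_list :: "nat \<Rightarrow> nat \<Rightarrow> nat list list" where
  "sr_vertex_list 0 n = (if n = 0 then [[]] else [])"
| "sr_vertex_list (Suc m) n =
     concat (map (\<lambda>k. map (Cons k) (sr_vertex_list m (n - k))) [0..<Suc n])"

definition sr_adj :: "nat \<Rightarrow> nat list \<Rightarrow> nat list \<Rightarrow> bool" where
  "sr_adj m u v \<longleftrightarrow> card {k. k < m \<and> u ! k \<noteq> v ! k} = 2"

definition sr_adj_matrix :: "nat \<Rightarrow> nat \<Rightarrow> real mat" where
  "sr_adj_matrix m n =
     (let vs = sr_vertex_list m n
      in mat (length vs) (length vs)
           (\<lambda>(i, j). if sr_adj m (vs ! i) (vs ! j) then 1 else 0))"

definition eig_mult :: "real mat \<Rightarrow> real \<Rightarrow> nat" where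
  "eig_mult A x = order x (char_poly A)"

definition inversions :: "nat \<Rightarrow> (nat \<Rightarrow> nat) \<Rightarrow> nat" where
  "inversions m p = card {(i, j). i < j \<and> j < m \<and> p i > p j}"

end

theory Submission
  imports Defs "HOL-Library.Disjoint_Sets"
begin

text \<open>
  Let \<open>N\<close> be the incidence matrix between the vertices of SR(m, n) and its lines
  \<open>{z + s e\<^sub>k | k < m}\<close> (\<open>z \<in> SR(m, n - s)\<close>, \<open>1 \<le> s \<le> n\<close>). Every edge lies on exactly one
  line and every vertex on exactly \<open>n\<close> lines, so \<open>A + n I = N N\<^sup>T\<close>. This matrix is symmetric,
  hence the multiplicity of \<open>-n\<close> is the dimension of its kernel, which consists of the functions
  summing to zero along every line.

  Such a function is determined by its values on the Lehmer codes (the vectors with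
  \<open>a\<^sub>i \<le> m - 1 - i\<close>), by induction along the colexicographic order. Conversely, for each Lehmer
  code \<open>a\<close> the coefficient function of the alternant \<open>\<Sum>\<^sub>\<sigma> sign \<sigma> t\<^sup>a\<^sup>+\<^sup>\<delta>\<^sup>\<circ>\<^sup>\<sigma>\<close>, with
  \<open>\<delta> = (m - 1, \<dots>, 0)\<close>, lies in the kernel, and these functions are unitriangular with respect
  to the Lehmer codes. So the multiplicity is the number of Lehmer codes with coordinate sum \<open>n\<close>,
  which satisfies the same recursion as the number of permutations with \<open>n\<close> inversions and as the
  coefficient of \<open>t\<^sup>n\<close> in \<open>\<Prod>\<^sub>i (1 + t + \<dots> + t\<^sup>i\<^sup>-\<^sup>1)\<close>.
\<close>

section \<open>Vertices and Lehmer codes\<close>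

definition sr_vertices :: "nat \<Rightarrow> nat \<Rightarrow> nat list set" where
  "sr_vertices m n = {x. length x = m \<and> sum_list x = n}"

lemma set_sr_vertex_list: "set (sr_vertex_list m n) = sr_vertices m n"
proof (induction m arbitrary: n)
  case 0
  then show ?case by (auto simp: sr_vertices_def)
next
  case (Suc m)
  have "x \<in> set (sr_vertex_list (Suc m) n)" if x: "x \<in> sr_vertices (Suc m) n" for x
  proof -
    obtain k y where "x = k # y"
      using x by (cases x) (auto simp: sr_vertices_def)
    with x show ?thesis by (force simp: Suc sr_vertices_def)
  qed
  moreover have "set (sr_vertex_list (Suc m) n) \<subseteq> sr_vertices (Suc m) n"
    by (auto simp: Suc sr_vertices_def)
  ultimately show ?case by blast
qed

lemma finite_sr_vertices: "finite (sr_vertices m n)"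
  using List.finite_set[of "sr_vertex_list m n"] by (simp add: set_sr_vertex_list)

lemma distinct_concat_map:
  assumes "distinct xs" "\<And>x. x \<in> set xs \<Longrightarrow> distinct (f x)"
    "\<And>x y. x \<in> set xs \<Longrightarrow> y \<in> set xs \<Longrightarrow> x \<noteq> y \<Longrightarrow> set (f x) \<inter> set (f y) = {}"
  shows "distinct (concat (map f xs))"
  using assms by (induction xs) fastforce+

lemma distinct_sr_vertex_list: "distinct (sr_vertex_list m n)"
proof (induction m arbitrary: n)
  case (Suc m)
  show ?case unfolding sr_vertex_list.simps
    by (rule distinct_concat_map) (auto simp: Suc distinct_map inj_on_def)
qed simp

lemma sr_vertex_list_nth_in_sr_vertices:
  "i < length (sr_vertex_list m n) \<Longrightarrow> sr_vertex_list m n ! i \<in> sr_vertices m n"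
  using nth_mem set_sr_vertex_list by blast

lemma nth_le_sum_list_sr_vertices: "x \<in> sr_vertices m n \<Longrightarrow> k < m \<Longrightarrow> x ! k \<le> n"
  using elem_le_sum_list[of k x] by (simp add: sr_vertices_def)

text \<open>These are the Lehmer codes (inversion tables) of the permutations of \<open>{..<m}\<close> with \<open>n\<close>
  inversions; below they are only counted, by the recursion they share with those permutations.\<close>

definition lehmer_codes :: "nat \<Rightarrow> nat \<Rightarrow> nat list set" where
  "lehmer_codes m n = {a \<in> sr_vertices m n. \<forall>i<m. a ! i \<le> m - 1 - i}"

lemma lehmer_codes_subset: "lehmer_codes m n \<subseteq> sr_vertices m n"
  unfolding lehmer_codes_def by blast

lemma finite_lehmer_codes: "finite (lehmer_codes m n)"
  using finite_subset[OF lehmer_codes_subset finite_sr_vertices] .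

lemma lehmer_codes_0: "lehmer_codes 0 n = (if n = 0 then {[]} else {})"
  by (auto simp: lehmer_codes_def sr_vertices_def)

lemma lehmer_codes_Suc:
  "lehmer_codes (Suc m) n = (\<Union>j\<le>min m n. (#) j ` lehmer_codes m (n - j))"
proof (rule Set.set_eqI, rule iffI)
  fix x
  assume x: "x \<in> lehmer_codes (Suc m) n"
  then obtain j y where xy: "x = j # y"
    by (cases x) (auto simp: lehmer_codes_def sr_vertices_def)
  have "y ! i \<le> m - 1 - i" if "i < m" for i
    using x that by (auto simp: lehmer_codes_def xy dest!: spec[of _ "Suc i"])
  then have "y \<in> lehmer_codes m (n - j)"
    using x by (auto simp: lehmer_codes_def sr_vertices_def xy)
  moreover have "j \<le> m" "j \<le> n"
    using x by (auto simp: lehmer_codes_def sr_vertices_def xy dest!: spec[of _ 0])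
  ultimately show "x \<in> (\<Union>j\<le>min m n. (#) j ` lehmer_codes m (n - j))"
    by (auto simp: xy)
next
  fix x
  assume "x \<in> (\<Union>j\<le>min m n. (#) j ` lehmer_codes m (n - j))"
  then obtain j y where "x = j # y" "j \<le> m" "j \<le> n" "y \<in> lehmer_codes m (n - j)"
    by auto
  then show "x \<in> lehmer_codes (Suc m) n"
    by (auto simp: lehmer_codes_def sr_vertices_def nth_Cons split: nat.split)
qed

lemma card_lehmer_codes_Suc:
  "card (lehmer_codes (Suc m) n) = (\<Sum>j\<le>min m n. card (lehmer_codes m (n - j)))"
  unfolding lehmer_codes_Suc
  by (subst card_UN_disjoint) (auto simp: finite_lehmer_codes card_image)

lemma prod_geometric_polys_Suc:
  "(\<Prod>i\<in>{2..Suc m}. \<Sum>j<i. monom (1::nat) j) = (\<Sum>j<Suc m. monom 1 j) * (\<Prod>i\<in>{2..m}. \<Sum>j<i. monom 1 j)"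
proof (cases m)
  case 0
  then show ?thesis by (simp add: monom_0 one_pCons)
next
  case (Suc k)
  then have "{2..Suc m} = insert (Suc m) {2..m}" by auto
  then show ?thesis by simp
qed

lemma coeff_prod_geometric_polys:
  "coeff (\<Prod>i\<in>{2..m}. \<Sum>j<i. monom (1::nat) j) n = card (lehmer_codes m n)"
proof (induction m arbitrary: n)
  case 0
  then show ?case by (simp add: lehmer_codes_0)
next
  case (Suc m)
  have "coeff (\<Prod>i\<in>{2..Suc m}. \<Sum>j<i. monom (1::nat) j) n
      = (\<Sum>j<Suc m. if n < j then 0 else card (lehmer_codes m (n - j)))"
    unfolding prod_geometric_polys_Suc sum_distrib_right coeff_sum coeff_monom_mult Suc
    by (auto intro!: sum.cong)
  also have "\<dots> = (\<Sum>j\<le>min m n. card (lehmer_codes m (n - j)))"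
    by (rule sum.mono_neutral_cong_right) auto
  finally show ?case by (simp add: card_lehmer_codes_Suc)
qed

section \<open>Permutations counted by inversions\<close>

definition permutations_with_inversions :: "nat \<Rightarrow> nat \<Rightarrow> (nat \<Rightarrow> nat) set" where
  "permutations_with_inversions m n = {p. p permutes {..<m} \<and> inversions m p = n}"

lemma finite_permutations_with_inversions: "finite (permutations_with_inversions m n)"
  unfolding permutations_with_inversions_def
  by (rule finite_subset[OF _ finite_permutations[of "{..<m}"]]) auto

text \<open>A permutation of \<open>{..<Suc m}\<close> is determined by its value at \<open>0\<close> and the
  standardised permutation of \<open>{..<m}\<close> formed by its remaining values.\<close>

definition perm_tail :: "nat \<Rightarrow> (nat \<Rightarrow> nat) \<Rightarrow> nat \<Rightarrow> nat" where
  "perm_tail m p i =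
     (if i < m then (if p 0 < p (Suc i) then p (Suc i) - 1 else p (Suc i)) else i)"

definition perm_cons :: "nat \<Rightarrow> nat \<Rightarrow> (nat \<Rightarrow> nat) \<Rightarrow> nat \<Rightarrow> nat" where
  "perm_cons m j q i =
     (if i = 0 then j else if i \<le> m then (if j \<le> q (i - 1) then Suc (q (i - 1)) else q (i - 1))
      else i)"

lemma permutes_lessThan_less: "p permutes {..<m} \<Longrightarrow> i < m \<Longrightarrow> p i < m"
  using permutes_in_image by fastforce

lemma perm_cons_0 [simp]: "perm_cons m j q 0 = j"
  by (simp add: perm_cons_def)

lemma perm_cons_permutes:
  assumes q: "q permutes {..<m}" and j: "j \<le> m"
  shows "perm_cons m j q permutes {..<Suc m}"
proof (rule inj_imp_permutes)
  have "perm_cons m j q a = perm_cons m j q b \<Longrightarrow> a = b" if "a < Suc m" "b < Suc m" for a b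
    using that permutes_inj[OF q, THEN injD, of "a - 1" "b - 1"]
    by (auto simp: perm_cons_def split: if_splits)
  then show "inj_on (perm_cons m j q) {..<Suc m}"
    by (auto intro: inj_onI)
  show "perm_cons m j q i \<in> {..<Suc m}" if "i \<in> {..<Suc m}" for i
    using that j permutes_lessThan_less[OF q, of "i - 1"] by (auto simp: perm_cons_def)
qed (auto simp: perm_cons_def)

lemma perm_tail_perm_cons:
  assumes "q permutes {..<m}"
  shows "perm_tail m (perm_cons m j q) = q"
  using assms by (auto simp: perm_tail_def perm_cons_def permutes_def)

lemma perm_cons_perm_tail:
  assumes p: "p permutes {..<Suc m}"
  shows "perm_cons m (p 0) (perm_tail m p) = p"
proof
  fix i
  have "p i \<noteq> p 0" if "i \<noteq> 0"
    using that permutes_inj[OF p] by (auto dest: injD)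
  then show "perm_cons m (p 0) (perm_tail m p) i = p i"
    using p by (cases i) (auto simp: perm_cons_def perm_tail_def permutes_def)
qed

lemma perm_tail_permutes:
  assumes p: "p permutes {..<Suc m}"
  shows "perm_tail m p permutes {..<m}"
proof (rule inj_imp_permutes)
  have p0: "p 0 < Suc m" and ne0: "p (Suc i) \<noteq> p 0" for i
    using permutes_lessThan_less[OF p] permutes_inj[OF p] by (auto dest: injD)
  show "inj_on (perm_tail m p) {..<m}"
  proof (rule inj_onI)
    fix a b
    assume "a \<in> {..<m}" "b \<in> {..<m}" "perm_tail m p a = perm_tail m p b"
    moreover have "p (Suc a) \<noteq> p 0" "p (Suc b) \<noteq> p 0" by (fact ne0)+
    ultimately have "p (Suc a) = p (Suc b)" by (auto simp: perm_tail_def split: if_splits)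
    then show "a = b" using permutes_inj[OF p] by (auto dest: injD)
  qed
  show "perm_tail m p i \<in> {..<m}" if "i \<in> {..<m}" for i
    using that p0 ne0[of i] permutes_lessThan_less[OF p, of "Suc i"] by (auto simp: perm_tail_def)
qed (auto simp: perm_tail_def)

lemma card_smaller_than_first:
  assumes p: "p permutes {..<Suc m}"
  shows "card {j. 0 < j \<and> j < Suc m \<and> p j < p 0} = p 0"
proof -
  have "p ` {j. 0 < j \<and> j < Suc m \<and> p j < p 0} = {..<p 0}"
  proof (intro equalityI subsetI)
    fix v
    assume v: "v \<in> {..<p 0}"
    then have "v \<in> p ` {..<Suc m}"
      using permutes_image[OF p] permutes_lessThan_less[OF p, of 0] by auto
    then obtain j where "j < Suc m" "v = p j" by auto
    with v show "v \<in> p ` {j. 0 < j \<and> j < Suc m \<and> p j < p 0}"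
      by (cases j) auto
  qed auto
  then show ?thesis
    using card_image[OF inj_on_subset[OF permutes_inj[OF p] subset_UNIV]] by (metis card_lessThan)
qed

lemma inversions_Suc:
  assumes p: "p permutes {..<Suc m}"
  shows "inversions (Suc m) p = p 0 + inversions m (perm_tail m p)"
proof -
  let ?first = "{(i::nat, j). i = 0 \<and> 0 < j \<and> j < Suc m \<and> p j < p 0}"
  let ?rest = "{(i, j). 0 < i \<and> i < j \<and> j < Suc m \<and> p j < p i}"
  have split: "{(i, j). i < j \<and> j < Suc m \<and> p j < p i} = ?first \<union> ?rest"
    by auto
  have "?first = {0} \<times> {j. 0 < j \<and> j < Suc m \<and> p j < p 0}"
    by auto
  then have first: "card ?first = p 0"
    by (simp add: card_cartesian_product card_smaller_than_first[OF p])
  have mono: "p (Suc j) < p (Suc i) \<longleftrightarrow> perm_tail m p j < perm_tail m p i" if "i < m" "j < m" for i j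
  proof -
    have "p (Suc i) \<noteq> p 0" "p (Suc j) \<noteq> p 0"
      using permutes_inj[OF p] by (auto dest: injD)
    then show ?thesis using that by (auto simp: perm_tail_def)
  qed
  then have "?rest = map_prod Suc Suc ` {(i, j). i < j \<and> j < m \<and> perm_tail m p j < perm_tail m p i}"
  proof (intro equalityI subsetI)
    fix x
    assume "x \<in> ?rest"
    then obtain a b where ab: "x = (a, b)" "0 < a" "a < b" "b < Suc m" "p b < p a"
      by blast
    then obtain i j where "a = Suc i" "b = Suc j"
      by (metis gr0_conv_Suc less_trans)
    with ab have "x = (Suc i, Suc j)" "i < j" "j < m" "p (Suc j) < p (Suc i)"
      by auto
    with mono show "x \<in> map_prod Suc Suc ` {(i, j). i < j \<and> j < m \<and> perm_tail m p j < perm_tail m p i}"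
      by auto
  qed auto
  then have rest: "card ?rest = inversions m (perm_tail m p)"
    by (simp add: card_image inversions_def map_prod_def inj_on_def)
  have "?first \<subseteq> {..<Suc m} \<times> {..<Suc m}" "?rest \<subseteq> {..<Suc m} \<times> {..<Suc m}"
    by auto
  then have "finite ?first" "finite ?rest"
    by (auto dest: finite_subset)
  then have "inversions (Suc m) p = card ?first + card ?rest"
    unfolding inversions_def split by (rule card_Un_disjoint) auto
  then show ?thesis
    by (simp only: first rest)
qed

lemma card_permutations_with_inversions_Suc:
  "card (permutations_with_inversions (Suc m) n)
     = (\<Sum>j\<le>min m n. card (permutations_with_inversions m (n - j)))"
proof -
  let ?P = permutations_with_inversions
  have "bij_betw (\<lambda>p. (p 0, perm_tail m p)) (?P (Suc m) n) (SIGMA j:{..min m n}. ?P m (n - j))"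
  proof (rule bij_betw_byWitness[where f' = "\<lambda>(j, q). perm_cons m j q"])
    show "(\<lambda>p. (p 0, perm_tail m p)) ` ?P (Suc m) n \<subseteq> (SIGMA j:{..min m n}. ?P m (n - j))"
      using inversions_Suc permutes_lessThan_less[of _ "Suc m" 0] perm_tail_permutes
      by (fastforce simp: permutations_with_inversions_def)
    show "(\<lambda>(j, q). perm_cons m j q) ` (SIGMA j:{..min m n}. ?P m (n - j)) \<subseteq> ?P (Suc m) n"
      using perm_cons_permutes inversions_Suc[OF perm_cons_permutes] perm_tail_perm_cons
      by (fastforce simp: permutations_with_inversions_def)
  qed (auto simp: permutations_with_inversions_def perm_cons_perm_tail perm_tail_perm_cons)
  then have "card (?P (Suc m) n) = card (SIGMA j:{..min m n}. ?P m (n - j))"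
    by (rule bij_betw_same_card)
  also have "\<dots> = (\<Sum>j\<le>min m n. card (?P m (n - j)))"
    by (rule card_SigmaI) (auto simp: finite_permutations_with_inversions)
  finally show ?thesis .
qed

lemma card_permutations_with_inversions:
  "card (permutations_with_inversions m n) = card (lehmer_codes m n)"
proof (induction m arbitrary: n)
  case 0
  have "permutations_with_inversions 0 n = (if n = 0 then {id} else {})"
    by (auto simp: permutations_with_inversions_def inversions_def)
  then show ?case by (simp add: lehmer_codes_0)
next
  case (Suc m)
  then show ?case by (simp add: card_permutations_with_inversions_Suc card_lehmer_codes_Suc)
qed

section \<open>Functions summing to zero along the lines\<close>

definition bump :: "nat list \<Rightarrow> nat \<Rightarrow> nat \<Rightarrow> nat list" where
  "bump z s k = z[k := z ! k + s]"

lemma length_bump [simp]: "length (bump z s k) = length z"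
  by (simp add: bump_def)

lemma nth_bump: "k < length z \<Longrightarrow> bump z s k ! j = (if j = k then z ! k + s else z ! j)"
  by (simp add: bump_def)

lemma sum_list_update_add:
  "k < length (z :: nat list) \<Longrightarrow> sum_list (z[k := z ! k + s]) = sum_list z + s"
  by (induction z arbitrary: k) (auto split: nat.split)

lemma sum_list_update_diff:
  "k < length (x :: nat list) \<Longrightarrow> s \<le> x ! k \<Longrightarrow> sum_list (x[k := x ! k - s]) = sum_list x - s"
  using sum_list_update_add[of k "x[k := x ! k - s]" s] by simp

lemma sum_list_bump: "k < length z \<Longrightarrow> sum_list (bump z s k) = sum_list z + s"
  unfolding bump_def by (rule sum_list_update_add)

lemma bump_update_diff: "k < length x \<Longrightarrow> s \<le> x ! k \<Longrightarrow> bump (x[k := x ! k - s]) s k = x"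
  by (simp add: bump_def)

lemma bump_in_sr_vertices:
  "z \<in> sr_vertices m (n - s) \<Longrightarrow> s \<le> n \<Longrightarrow> k < m \<Longrightarrow> bump z s k \<in> sr_vertices m n"
  by (simp add: sr_vertices_def sum_list_bump)

text \<open>A pair \<open>(z, s)\<close> encodes the line \<open>{bump z s k | k < m}\<close> of SR(m, n), a clique.\<close>

definition sr_lines :: "nat \<Rightarrow> nat \<Rightarrow> (nat list \<times> nat) set" where
  "sr_lines m n = {(z, s). 1 \<le> s \<and> s \<le> n \<and> z \<in> sr_vertices m (n - s)}"

definition zero_sum_on_lines :: "nat \<Rightarrow> nat \<Rightarrow> (nat list \<Rightarrow> real) \<Rightarrow> bool" where
  "zero_sum_on_lines m n f \<longleftrightarrow> (\<forall>(z, s) \<in> sr_lines m n. (\<Sum>k<m. f (bump z s k)) = 0)"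

definition vertices_above :: "nat \<Rightarrow> nat \<Rightarrow> nat list \<Rightarrow> nat list set" where
  "vertices_above m n w = {x \<in> sr_vertices m n. \<forall>j<m. w ! j \<le> x ! j}"

lemma finite_vertices_above: "finite (vertices_above m n w)"
  using finite_sr_vertices by (simp add: vertices_above_def)

lemma sum_excess_eq:
  assumes "x \<in> vertices_above m n w" "length w = m"
  shows "(\<Sum>k<m. x ! k - w ! k) = n - sum_list w"
proof -
  have "(\<Sum>k<m. x ! k - w ! k) = (\<Sum>k<m. x ! k) - (\<Sum>k<m. w ! k)"
    using assms by (intro sum_subtractf_nat) (auto simp: vertices_above_def)
  moreover have "(\<Sum>k<m. x ! k) = n" "(\<Sum>k<m. w ! k) = sum_list w"
    using assms by (auto simp: vertices_above_def sr_vertices_def sum_list_sum_nth atLeast0LessThan)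
  ultimately show ?thesis
    by simp
qed

text \<open>Counting each \<open>x \<ge> w\<close> with multiplicity \<open>x ! k - w ! k\<close> amounts to summing over all ways
  of writing \<open>x = bump z s k\<close> with \<open>z \<ge> w\<close>.\<close>

lemma sum_vertices_above_weighted:
  assumes k: "k < m"
  shows "(\<Sum>x\<in>vertices_above m n w. real (x ! k - w ! k) * f x)
       = (\<Sum>s\<in>{1..n}. \<Sum>z\<in>vertices_above m (n - s) w. f (bump z s k))"
proof -
  let ?A = "vertices_above m n w"
  have "(\<Sum>x\<in>?A. real (x ! k - w ! k) * f x) = (\<Sum>x\<in>?A. \<Sum>s\<in>{1..x ! k - w ! k}. f x)"
    by simp
  also have "\<dots> = (\<Sum>(x, s)\<in>Sigma ?A (\<lambda>x. {1..x ! k - w ! k}). f x)"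
    by (rule sum.Sigma) (auto simp: finite_vertices_above)
  also have "\<dots> = (\<Sum>(s, z)\<in>Sigma {1..n} (\<lambda>s. vertices_above m (n - s) w). f (bump z s k))"
  proof (rule sum.reindex_bij_witness[where i = "\<lambda>(s, z). (bump z s k, s)"
        and j = "\<lambda>(x, s). (s, x[k := x ! k - s])"])
    fix a
    assume "a \<in> Sigma {1..n} (\<lambda>s. vertices_above m (n - s) w)"
    then obtain s z where a: "a = (s, z)" "1 \<le> s" "s \<le> n" "z \<in> vertices_above m (n - s) w"
      by auto
    then have "length z = m"
      by (simp add: vertices_above_def sr_vertices_def)
    with a k show "(case (case a of (s, z) \<Rightarrow> (bump z s k, s)) of (x, s) \<Rightarrow> (s, x[k := x ! k - s])) = a"
      "(case a of (s, z) \<Rightarrow> (bump z s k, s)) \<in> Sigma ?A (\<lambda>x. {1..x ! k - w ! k})"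
      by (auto simp: bump_def vertices_above_def sr_vertices_def sum_list_update_add nth_list_update)
  next
    fix b
    assume "b \<in> Sigma ?A (\<lambda>x. {1..x ! k - w ! k})"
    then obtain x s where b: "b = (x, s)" "1 \<le> s" "s \<le> x ! k - w ! k" "x \<in> ?A"
      by auto
    then have x: "length x = m" "x ! k \<le> n"
      using k nth_le_sum_list_sr_vertices by (auto simp: vertices_above_def sr_vertices_def)
    with b k show "(case (case b of (x, s) \<Rightarrow> (s, x[k := x ! k - s])) of (s, z) \<Rightarrow> (bump z s k, s)) = b"
      "(case b of (x, s) \<Rightarrow> (s, x[k := x ! k - s])) \<in> Sigma {1..n} (\<lambda>s. vertices_above m (n - s) w)"
      by (auto simp: bump_update_diff vertices_above_def sr_vertices_def sum_list_update_diff
          nth_list_update)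
  qed (use k in \<open>auto simp: vertices_above_def sr_vertices_def bump_update_diff\<close>)
  also have "\<dots> = (\<Sum>s\<in>{1..n}. \<Sum>z\<in>vertices_above m (n - s) w. f (bump z s k))"
    by (rule sum.Sigma[symmetric]) (auto simp: finite_vertices_above)
  finally show ?thesis .
qed

lemma sum_vertices_above_eq_0:
  assumes f: "zero_sum_on_lines m n f" and w: "length w = m" "sum_list w < n"
  shows "(\<Sum>x\<in>vertices_above m n w. f x) = 0"
proof -
  let ?A = "vertices_above m n w"
  have "real (n - sum_list w) * (\<Sum>x\<in>?A. f x) = (\<Sum>x\<in>?A. real (\<Sum>k<m. x ! k - w ! k) * f x)"
    using w by (simp add: sum_distrib_left sum_excess_eq)
  also have "\<dots> = (\<Sum>k<m. \<Sum>x\<in>?A. real (x ! k - w ! k) * f x)"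
    by (simp add: sum_distrib_right sum.swap[of _ "{..<m}"])
  also have "\<dots> = (\<Sum>s\<in>{1..n}. \<Sum>z\<in>vertices_above m (n - s) w. \<Sum>k<m. f (bump z s k))"
    by (simp add: sum_vertices_above_weighted sum.swap[of _ "{..<m}"])
  also have "\<dots> = 0"
  proof (rule sum.neutral, rule ballI, rule sum.neutral, rule ballI)
    fix s z
    assume "s \<in> {1..n}" "z \<in> vertices_above m (n - s) w"
    with f show "(\<Sum>k<m. f (bump z s k)) = 0"
      by (auto simp: zero_sum_on_lines_def sr_lines_def vertices_above_def)
  qed
  finally show ?thesis
    using w by simp
qed

definition vertices_above_fixing :: "nat \<Rightarrow> nat \<Rightarrow> nat list \<Rightarrow> nat \<Rightarrow> nat list set" where
  "vertices_above_fixing m n w i = {x \<in> vertices_above m n w. \<forall>j<m. i < j \<longrightarrow> x ! j = w ! j}"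

lemma finite_vertices_above_fixing: "finite (vertices_above_fixing m n w i)"
  using finite_vertices_above by (simp add: vertices_above_fixing_def)

lemma vertices_above_fixing_Suc:
  assumes i: "Suc i < m" and w: "length w = m"
  shows "vertices_above_fixing m n w (Suc i)
       = vertices_above_fixing m n w i \<union> vertices_above_fixing m n (bump w 1 (Suc i)) (Suc i)"
    and "vertices_above_fixing m n w i \<inter> vertices_above_fixing m n (bump w 1 (Suc i)) (Suc i) = {}"
proof -
  have bump: "bump w 1 (Suc i) ! j = (if j = Suc i then Suc (w ! Suc i) else w ! j)" for j
    using i w by (simp add: nth_bump)
  have "x \<in> vertices_above_fixing m n w (Suc i) \<longleftrightarrow>
        x \<in> vertices_above_fixing m n w i \<or> x \<in> vertices_above_fixing m n (bump w 1 (Suc i)) (Suc i)"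
    for x
    using i unfolding vertices_above_fixing_def vertices_above_def bump
    by (auto simp: Suc_le_eq) (metis Suc_lessI le_neq_implies_less not_less_eq)+
  then show "vertices_above_fixing m n w (Suc i)
       = vertices_above_fixing m n w i \<union> vertices_above_fixing m n (bump w 1 (Suc i)) (Suc i)"
    by blast
  show "vertices_above_fixing m n w i \<inter> vertices_above_fixing m n (bump w 1 (Suc i)) (Suc i) = {}"
    using i unfolding vertices_above_fixing_def vertices_above_def bump by force
qed

lemma sum_vertices_above_fixing_eq_0:
  assumes f: "zero_sum_on_lines m n f"
  shows "i < m \<Longrightarrow> length w = m \<Longrightarrow> sum_list w + (m - i) \<le> n
    \<Longrightarrow> (\<Sum>x\<in>vertices_above_fixing m n w i. f x) = 0"
proof (induction "m - 1 - i" arbitrary: i w)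
  case 0
  then have "vertices_above_fixing m n w i = vertices_above m n w"
    by (auto simp: vertices_above_fixing_def)
  with 0 show ?case
    using sum_vertices_above_eq_0[OF f] by simp
next
  case (Suc d)
  then have i: "Suc i < m" by simp
  have "(\<Sum>x\<in>vertices_above_fixing m n w (Suc i). f x) = 0"
    "(\<Sum>x\<in>vertices_above_fixing m n (bump w 1 (Suc i)) (Suc i). f x) = 0"
    using Suc i by (auto intro!: Suc.hyps simp: sum_list_bump)
  then show ?case
    unfolding vertices_above_fixing_Suc(1)[OF i Suc.prems(2)]
    using vertices_above_fixing_Suc(2)[OF i Suc.prems(2)]
    by (simp add: sum.union_disjoint finite_vertices_above_fixing)
qed

lemma horner_sum_less_if_last_difference:
  fixes b :: nat
  assumes "length x = length y" "i < length x" "\<And>j. i < j \<Longrightarrow> j < length x \<Longrightarrow> x ! j = y ! j"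
    "y ! i < x ! i" "\<And>j. j < length y \<Longrightarrow> y ! j < b"
  shows "horner_sum id b y < horner_sum id b x"
  using assms
proof (induction i arbitrary: x y)
  case 0
  then obtain a c xs ys where xy: "x = a # xs" "y = c # ys"
    by (cases x; cases y) auto
  have "xs = ys"
    using 0 0(3)[of "Suc _"] by (intro nth_equalityI) (auto simp: xy)
  moreover have "c < a"
    using 0 xy by simp
  ultimately show ?case
    using xy by simp
next
  case (Suc i)
  then obtain a c xs ys where xy: "x = a # xs" "y = c # ys"
    by (cases x; cases y) auto
  have "horner_sum id b ys < horner_sum id b xs"
  proof (rule Suc.IH)
    show "length xs = length ys" "i < length xs" "ys ! i < xs ! i"
      using Suc.prems xy by auto
    show "xs ! j = ys ! j" if "i < j" "j < length xs" for j
      using Suc.prems(3)[of "Suc j"] that xy by simp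
    show "ys ! j < b" if "j < length ys" for j
      using Suc.prems(5)[of "Suc j"] that xy by simp
  qed
  then have "b * (horner_sum id b ys + 1) \<le> b * horner_sum id b xs"
    by (intro mult_le_mono2) simp
  moreover have "c < b"
    using Suc.prems(5)[of 0] xy by simp
  ultimately show ?case
    using xy by (simp add: id_def)
qed

lemma list_eq_if_le_and_sum_list_eq:
  assumes "length x = length y" "\<And>j. j < length x \<Longrightarrow> x ! j \<le> y ! j"
    "sum_list x = (sum_list y :: nat)"
  shows "x = y"
  using assms
proof (induction x y rule: list_induct2)
  case (Cons a x b y)
  have "a \<le> b" "\<And>j. j < length x \<Longrightarrow> x ! j \<le> y ! j"
    using Cons.prems(1)[of 0] Cons.prems(1)[of "Suc _"] by auto
  moreover from this have "sum_list x \<le> sum_list y"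
    using Cons.hyps by (auto simp: sum_list_sum_nth intro: sum_mono)
  ultimately show ?case
    using Cons by simp
qed simp

lemma vertices_above_fixing_colex_less:
  assumes x: "x \<in> sr_vertices m n" and i: "i < m"
    and y: "y \<in> vertices_above_fixing m n (x[i := x ! i - d]) i" "y \<noteq> x"
  shows "horner_sum id (Suc n) y < horner_sum id (Suc n) x"
proof -
  let ?w = "x[i := x ! i - d]"
  have x_len: "length x = m"
    using x by (simp add: sr_vertices_def)
  have w_nth: "?w ! j = (if j = i then x ! i - d else x ! j)" for j
    using i x_len by simp
  have y_in: "y \<in> sr_vertices m n" and y_above: "\<And>j. j < m \<Longrightarrow> ?w ! j \<le> y ! j"
    and y_fix: "\<And>j. i < j \<Longrightarrow> j < m \<Longrightarrow> y ! j = ?w ! j"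
    using y by (auto simp: vertices_above_fixing_def vertices_above_def)
  have "y ! i < x ! i"
  proof (rule ccontr)
    assume "\<not> y ! i < x ! i"
    then have "x ! j \<le> y ! j" if "j < length x" for j
      using that x_len y_above[of j] y_fix[of j] w_nth[of j] by (cases "j < i"; cases "j = i") auto
    then have "x = y"
      using x y_in by (intro list_eq_if_le_and_sum_list_eq) (auto simp: sr_vertices_def)
    with y show False by simp
  qed
  then show ?thesis
    using x_len i y_in y_fix w_nth nth_le_sum_list_sr_vertices[OF y_in]
    by (intro horner_sum_less_if_last_difference[where i = i])
      (auto simp: sr_vertices_def less_Suc_eq_le)
qed

text \<open>Induction along the colexicographic order: a vertex \<open>x\<close> outside the Lehmer codes has
  some \<open>x ! i > m - 1 - i\<close>; lowering it by \<open>m - i\<close> gives a \<open>w\<close> whose box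
  \<open>vertices_above_fixing m n w i\<close> has zero \<open>f\<close>-sum and contains, besides \<open>x\<close>, only
  colexicographically smaller vertices.\<close>

theorem zero_sum_on_lines_eq_0:
  assumes f: "zero_sum_on_lines m n f" and codes: "\<And>a. a \<in> lehmer_codes m n \<Longrightarrow> f a = 0"
  shows "x \<in> sr_vertices m n \<Longrightarrow> f x = 0"
proof (induction x rule: measure_induct_rule[where f = "horner_sum id (Suc n)"])
  case (less x)
  have x: "length x = m" "sum_list x = n"
    using less.prems by (auto simp: sr_vertices_def)
  show ?case
  proof (cases "x \<in> lehmer_codes m n")
    case False
    then obtain i where i: "i < m" "x ! i > m - 1 - i"
      using less.prems by (auto simp: lehmer_codes_def)
    define w where "w = x[i := x ! i - (m - i)]"
    have "m - i \<le> x ! i"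
      using i by simp
    then have w: "length w = m" "sum_list w + (m - i) = n"
      using x i elem_le_sum_list[of i x] sum_list_update_diff[of i x "m - i"] by (auto simp: w_def)
    have x_in: "x \<in> vertices_above_fixing m n w i"
      using less.prems i x
      by (auto simp: vertices_above_fixing_def vertices_above_def w_def nth_list_update)
    have "f y = 0" if "y \<in> vertices_above_fixing m n w i - {x}" for y
      using that less.prems i vertices_above_fixing_colex_less[of x m n i y "m - i"] less.IH
      by (auto simp: w_def vertices_above_fixing_def vertices_above_def)
    then have "(\<Sum>y\<in>vertices_above_fixing m n w i. f y) = f x"
      using x_in finite_vertices_above_fixing by (simp add: sum.remove)
    with i w show ?thesis
      using sum_vertices_above_fixing_eq_0[OF f] by simp
  qed (use codes in simp)
qed

text \<open>With \<open>\<delta> = (m - 1, \<dots>, 1, 0)\<close>, \<open>alternant m a x\<close> is the coefficient of the monomial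
  \<open>t\<^sup>x\<^sup>+\<^sup>\<delta>\<close> in the alternant \<open>\<Sum>\<^sub>\<sigma> sign \<sigma> t\<^sup>a\<^sup>+\<^sup>\<delta>\<^sup>\<circ>\<^sup>\<sigma>\<close>.\<close>

definition alternant_term :: "nat \<Rightarrow> nat list \<Rightarrow> nat list \<Rightarrow> (nat \<Rightarrow> nat) \<Rightarrow> bool" where
  "alternant_term m a x \<sigma> \<longleftrightarrow> (\<forall>j<m. x ! j + (m - 1 - j) = a ! j + (m - 1 - \<sigma> j))"

definition alternant :: "nat \<Rightarrow> nat list \<Rightarrow> nat list \<Rightarrow> real" where
  "alternant m a x =
     (\<Sum>\<sigma>\<in>{\<sigma>. \<sigma> permutes {..<m}}. if alternant_term m a x \<sigma> then of_int (sign \<sigma>) else 0)"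

lemma alternant_diagonal: "alternant m a a = 1"
proof -
  have "alternant_term m a a \<sigma> \<longleftrightarrow> \<sigma> = id" if \<sigma>: "\<sigma> permutes {..<m}" for \<sigma>
  proof
    assume "alternant_term m a a \<sigma>"
    then have "\<sigma> j = j" if "j < m" for j
      using that permutes_lessThan_less[OF \<sigma> that] by (auto simp: alternant_term_def)
    with \<sigma> show "\<sigma> = id"
      by (intro ext) (metis id_apply lessThan_iff permutes_not_in)
  qed (simp add: alternant_term_def)
  then have "alternant m a a = (\<Sum>\<sigma>\<in>{\<sigma>. \<sigma> permutes {..<m}}. if \<sigma> = id then 1 else 0)"
    unfolding alternant_def by (intro sum.cong) auto
  then show ?thesis
    by (simp add: finite_permutations permutes_id)
qed

lemma permutes_largest_moved_point:
  fixes \<sigma> :: "nat \<Rightarrow> nat"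
  assumes \<sigma>: "\<sigma> permutes {..<m}" and moved: "\<not> (\<forall>j<m. \<sigma> j = j)"
  obtains i where "i < m" "\<sigma> i < i" "\<And>j. i < j \<Longrightarrow> j < m \<Longrightarrow> \<sigma> j = j"
proof -
  define i where "i = Max {j. j < m \<and> \<sigma> j \<noteq> j}"
  have i: "i < m" "\<sigma> i \<noteq> i"
    using moved Max_in[of "{j. j < m \<and> \<sigma> j \<noteq> j}"] by (auto simp: i_def)
  have above: "\<sigma> j = j" if "i < j" "j < m" for j
  proof (rule ccontr)
    assume "\<sigma> j \<noteq> j"
    with that have "j \<le> i"
      unfolding i_def by (intro Max_ge) auto
    with that show False by simp
  qed
  have "\<sigma> i < i"
  proof (rule ccontr)
    assume "\<not> \<sigma> i < i"
    with i have "\<sigma> (\<sigma> i) = \<sigma> i"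
      using above permutes_lessThan_less[OF \<sigma>] by simp
    with i show False
      using permutes_inj[OF \<sigma>] by (auto dest: injD)
  qed
  with i above that show thesis
    by blast
qed

lemma alternant_triangular:
  assumes a: "a \<in> sr_vertices m n" and x: "length x = m" and nz: "alternant m a x \<noteq> 0"
  shows "x = a \<or> horner_sum id (Suc n) a < horner_sum id (Suc n) x"
proof -
  obtain \<sigma> where \<sigma>: "\<sigma> permutes {..<m}" and \<sigma>_term: "alternant_term m a x \<sigma>"
  proof -
    from nz obtain \<sigma> where "\<sigma> \<in> {\<sigma>. \<sigma> permutes {..<m}}"
      "(if alternant_term m a x \<sigma> then real_of_int (sign \<sigma>) else 0) \<noteq> 0"
      unfolding alternant_def by (rule sum.not_neutral_contains_not_neutral)
    with that show thesis
      by (cases "alternant_term m a x \<sigma>") auto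
  qed
  have a_len: "length a = m"
    using a by (simp add: sr_vertices_def)
  have eq: "x ! j + (m - 1 - j) = a ! j + (m - 1 - \<sigma> j)" if "j < m" for j
    using \<sigma>_term that by (simp add: alternant_term_def)
  show ?thesis
  proof (cases "\<forall>j<m. \<sigma> j = j")
    case True
    then have "x ! j = a ! j" if "j < m" for j
      using eq[OF that] that by (metis add_right_cancel)
    then have "x = a"
      using x a_len by (intro nth_equalityI) auto
    then show ?thesis ..
  next
    case False
    obtain i where i: "i < m" "\<sigma> i < i" and above: "\<And>j. i < j \<Longrightarrow> j < m \<Longrightarrow> \<sigma> j = j"
      using permutes_largest_moved_point[OF \<sigma> False] by blast
    then have "a ! i < x ! i"
      using eq[OF i(1)] by simp
    moreover have "x ! j = a ! j" if "i < j" "j < m" for j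
      using eq[OF that(2)] above[OF that] by (metis add_right_cancel)
    ultimately have "horner_sum id (Suc n) a < horner_sum id (Suc n) x"
      using x a_len i nth_le_sum_list_sr_vertices[OF a]
      by (intro horner_sum_less_if_last_difference[where i = i]) (auto simp: less_Suc_eq_le)
    then show ?thesis ..
  qed
qed

text \<open>On the terms of \<open>\<Sum>k<m. alternant m a (bump z s k)\<close>, moving the bump from \<open>k\<close> to the
  position \<open>l\<close> with \<open>\<sigma> l = \<sigma> k + s\<close> and composing \<open>\<sigma>\<close> with the transposition of \<open>k\<close> and \<open>l\<close>
  is a sign-reversing involution. The bound \<open>a ! k \<le> m - 1 - k\<close> guarantees that \<open>\<sigma> k + s < m\<close>,
  so that \<open>l\<close> exists.\<close>

definition move_bump :: "nat \<Rightarrow> nat \<times> (nat \<Rightarrow> nat) \<Rightarrow> nat \<times> (nat \<Rightarrow> nat)" where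
  "move_bump s = (\<lambda>(k, \<sigma>). let l = inv_into UNIV \<sigma> (\<sigma> k + s) in (l, \<sigma> \<circ> Transposition.transpose k l))"

lemma move_bump:
  assumes \<sigma>: "\<sigma> permutes {..<m}" and k: "k < m"
    and a: "length a = m" "\<And>j. j < m \<Longrightarrow> a ! j \<le> m - 1 - j"
    and z: "length z = m" and s: "1 \<le> s" and \<sigma>_term: "alternant_term m a (bump z s k) \<sigma>"
  obtains l where "move_bump s (k, \<sigma>) = (l, \<sigma> \<circ> Transposition.transpose k l)"
    "l < m" "l \<noteq> k" "\<sigma> \<circ> Transposition.transpose k l permutes {..<m}"
    "alternant_term m a (bump z s l) (\<sigma> \<circ> Transposition.transpose k l)"
    "move_bump s (l, \<sigma> \<circ> Transposition.transpose k l) = (k, \<sigma>)"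
    "sign (\<sigma> \<circ> Transposition.transpose k l) = - sign \<sigma>"
proof -
  define l where "l = inv_into UNIV \<sigma> (\<sigma> k + s)"
  let ?\<tau> = "\<sigma> \<circ> Transposition.transpose k l"
  have bump: "bump z s q ! j = (if j = q then z ! q + s else z ! j)" if "q < m" for q j
    using that z by (simp add: nth_bump)
  have eq: "bump z s k ! j + (m - 1 - j) = a ! j + (m - 1 - \<sigma> j)" if "j < m" for j
    using \<sigma>_term that by (simp add: alternant_term_def)
  have "\<sigma> k < m"
    using permutes_lessThan_less[OF \<sigma> k] .
  then have "\<sigma> k + s < m"
    using eq[OF k] bump[OF k, of k] a(2)[OF k] k by simp
  then have l: "l < m" and \<sigma>_l: "\<sigma> l = \<sigma> k + s"
    using permutes_lessThan_less[OF permutes_inv[OF \<sigma>]] permutes_inverses(1)[OF \<sigma>]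
    by (auto simp: l_def)
  then have lk: "l \<noteq> k"
    using s by auto
  have forth: "move_bump s (k, \<sigma>) = (l, ?\<tau>)"
    by (simp add: move_bump_def l_def Let_def)
  have \<tau>: "?\<tau> permutes {..<m}"
    using k l by (intro permutes_compose[OF permutes_swap_id \<sigma>]) auto
  have \<tau>_term: "alternant_term m a (bump z s l) ?\<tau>"
    unfolding alternant_term_def
  proof (intro allI impI)
    fix j
    assume "j < m"
    then show "bump z s l ! j + (m - 1 - j) = a ! j + (m - 1 - ?\<tau> j)"
      using eq[of j] eq[OF l] bump[OF k] bump[OF l] \<sigma>_l lk \<open>\<sigma> k + s < m\<close>
      by (cases "j = k"; cases "j = l") (auto simp: Transposition.transpose_def)
  qed
  have "inv_into UNIV ?\<tau> (?\<tau> l + s) = k"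
    using permutes_inverses(2)[OF \<tau>, of k] \<sigma>_l by simp
  then have backward: "move_bump s (l, ?\<tau>) = (k, \<sigma>)"
    by (simp add: move_bump_def Let_def comp_assoc transpose_commute[of l k])
  have "sign ?\<tau> = - sign \<sigma>"
    using lk permutes_imp_permutation[OF _ \<sigma>]
    by (simp add: sign_compose permutation_swap_id sign_swap_id)
  with forth l lk \<tau> \<tau>_term backward show ?thesis
    by (rule that)
qed

theorem alternant_zero_sum_on_lines:
  assumes a: "a \<in> lehmer_codes m n"
  shows "zero_sum_on_lines m n (alternant m a)"
  unfolding zero_sum_on_lines_def
proof (clarify)
  fix z s
  assume "(z, s) \<in> sr_lines m n"
  then have z: "length z = m" and s: "1 \<le> s"
    by (auto simp: sr_lines_def sr_vertices_def)
  have a_len: "length a = m" and a_bound: "\<And>j. j < m \<Longrightarrow> a ! j \<le> m - 1 - j"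
    using a by (auto simp: lehmer_codes_def sr_vertices_def)
  let ?P = "{\<sigma>. \<sigma> permutes {..<m}}"
  let ?T = "{p \<in> {..<m} \<times> ?P. alternant_term m a (bump z s (fst p)) (snd p)}"
  have "(\<Sum>k<m. alternant m a (bump z s k))
      = (\<Sum>p\<in>{..<m} \<times> ?P.
           if alternant_term m a (bump z s (fst p)) (snd p) then of_int (sign (snd p)) else 0)"
    by (simp add: alternant_def sum.cartesian_product case_prod_beta)
  also have "\<dots> = (\<Sum>p\<in>?T. of_int (sign (snd p)))"
    by (rule sum.inter_filter[symmetric]) (simp add: finite_permutations)
  also have "\<dots> = 0"
  proof (rule sum_involution_eq_0[where h = "move_bump s"])
    fix p
    assume "p \<in> ?T"
    then obtain k \<sigma> where p: "p = (k, \<sigma>)" "k < m" "\<sigma> permutes {..<m}"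
      "alternant_term m a (bump z s k) \<sigma>"
      by (cases p) auto
    from move_bump[OF p(3,2) a_len a_bound z s p(4)] obtain l
      where "move_bump s (k, \<sigma>) = (l, \<sigma> \<circ> Transposition.transpose k l)"
        "l < m" "l \<noteq> k" "\<sigma> \<circ> Transposition.transpose k l permutes {..<m}"
        "alternant_term m a (bump z s l) (\<sigma> \<circ> Transposition.transpose k l)"
        "move_bump s (l, \<sigma> \<circ> Transposition.transpose k l) = (k, \<sigma>)"
        "sign (\<sigma> \<circ> Transposition.transpose k l) = - sign \<sigma>" .
    with p show "real_of_int (sign (snd (move_bump s p))) + real_of_int (sign (snd p)) = 0"
      "move_bump s p \<in> ?T" "move_bump s (move_bump s p) = p" "move_bump s p \<noteq> p"
      by auto
  qed
  finally show "(\<Sum>k<m. alternant m a (bump z s k)) = 0" .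
qed

section \<open>Multiplicity of an eigenvalue with a symmetric shift\<close>

lemma sum_lessThan_split_at:
  assumes "k \<le> (N :: nat)"
  shows "(\<Sum>t\<in>{0..<N}. f t) = (\<Sum>t<k. f t) + (\<Sum>r<N - k. f (k + r))"
proof -
  have "(\<Sum>t\<in>{0..<N}. f t) = (\<Sum>t\<in>{0..<k}. f t) + (\<Sum>t\<in>{k..<N}. f t)"
    using sum.atLeastLessThan_concat[of 0 k N f] assms by simp
  moreover have "(\<Sum>t\<in>{k..<N}. f t) = (\<Sum>r<N - k. f (k + r))"
    using sum.shift_bounds_nat_ivl[of f 0 k "N - k"] assms by (simp add: atLeast0LessThan add.commute)
  ultimately show ?thesis
    by (simp add: atLeast0LessThan)
qed

lemma scalar_prod_self_eq_0_iff:
  fixes x :: "real vec"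
  assumes "x \<in> carrier_vec n"
  shows "x \<bullet> x = 0 \<longleftrightarrow> x = 0\<^sub>v n"
  using conjugate_square_eq_0_vec[OF assms] by (simp add: scalar_prod_def)

lemma symmetric_mat_kernel_square:
  fixes B :: "real mat"
  assumes B: "B \<in> carrier_mat N N" "transpose_mat B = B" and v: "v \<in> carrier_vec N"
    and "B *\<^sub>v (B *\<^sub>v v) = 0\<^sub>v N"
  shows "B *\<^sub>v v = 0\<^sub>v N"
proof -
  have "(B *\<^sub>v v) \<bullet> (B *\<^sub>v v) = (transpose_mat B *\<^sub>v v) \<bullet> (B *\<^sub>v v)"
    using B by simp
  also have "\<dots> = v \<bullet> (B *\<^sub>v (B *\<^sub>v v))"
    using B v by (intro transpose_vec_mult_scalar) auto
  also have "\<dots> = 0"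
    using assms by simp
  finally show ?thesis
    using B v by (simp add: scalar_prod_self_eq_0_iff[of _ N])
qed

lemma smult_one_mat_mult_vec:
  fixes v :: "'a :: semiring_1 vec"
  assumes v: "v \<in> carrier_vec n"
  shows "(c \<cdot>\<^sub>m 1\<^sub>m n) *\<^sub>v v = c \<cdot>\<^sub>v v"
proof (rule eq_vecI)
  fix i
  assume "i < dim_vec (c \<cdot>\<^sub>v v)"
  then have i: "i < n"
    using v by simp
  have "((c \<cdot>\<^sub>m 1\<^sub>m n) *\<^sub>v v) $ i = (\<Sum>j\<in>{0..<n}. c * (if j = i then 1 else 0) * v $ j)"
    using i v by (simp add: scalar_prod_def)
  also have "\<dots> = (\<Sum>j\<in>{0..<n}. if j = i then c * v $ j else 0)"
    by (rule sum.cong) auto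
  finally show "((c \<cdot>\<^sub>m 1\<^sub>m n) *\<^sub>v v) $ i = (c \<cdot>\<^sub>v v) $ i"
    using i v by simp
qed (use v in simp)

lemma mult_mat_vec_zero: "A \<in> carrier_mat nr nc \<Longrightarrow> A *\<^sub>v 0\<^sub>v nc = 0\<^sub>v nr"
  by (intro eq_vecI) auto

lemma eigenvector_if_shift_kernel:
  fixes A :: "'a :: comm_ring_1 mat"
  assumes A: "A \<in> carrier_mat N N" and v: "v \<in> carrier_vec N"
    and ker: "(A + c \<cdot>\<^sub>m 1\<^sub>m N) *\<^sub>v v = 0\<^sub>v N"
  shows "A *\<^sub>v v = (- c) \<cdot>\<^sub>v v"
proof -
  have sum_eq: "A *\<^sub>v v + c \<cdot>\<^sub>v v = 0\<^sub>v N"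
    using ker A v by (simp add: add_mult_distrib_mat_vec[of _ N N] smult_one_mat_mult_vec)
  have "(A *\<^sub>v v) $ i + c * v $ i = 0" if "i < N" for i
    using arg_cong[OF sum_eq, of "\<lambda>x. x $ i"] that A v by simp
  then show ?thesis
    using A v by (intro eq_vecI) (auto simp: add_eq_0_iff)
qed

lemma char_poly_four_block_mat_lower_left_zero:
  fixes A1 :: "'a :: idom mat"
  assumes A: "A1 \<in> carrier_mat k k" "A2 \<in> carrier_mat k l" "A4 \<in> carrier_mat l l"
  shows "char_poly (four_block_mat A1 A2 (0\<^sub>m l k) A4) = char_poly A1 * char_poly A4"
proof -
  let ?cm = "\<lambda>A. [:0, 1:] \<cdot>\<^sub>m 1\<^sub>m (dim_row A) + map_mat (\<lambda>a. [:- a:]) A"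
  have "?cm (four_block_mat A1 A2 (0\<^sub>m l k) A4)
      = four_block_mat (?cm A1) (map_mat (\<lambda>a. [:- a:]) A2) (0\<^sub>m l k) (?cm A4)"
    using A by (intro eq_matI) (auto simp: one_poly_def)
  then have "char_poly (four_block_mat A1 A2 (0\<^sub>m l k) A4) = det (?cm A1) * det (?cm A4)"
    using A unfolding char_poly_defs by (auto intro!: det_four_block_mat_lower_left_zero)
  then show ?thesis
    unfolding char_poly_defs .
qed

lemma order_char_poly_four_block_scalar:
  fixes c :: real
  assumes "M2 \<in> carrier_mat k l" "M4 \<in> carrier_mat l l" "\<not> eigenvalue M4 (- c)"
  shows "order (- c) (char_poly (four_block_mat ((- c) \<cdot>\<^sub>m 1\<^sub>m k) M2 (0\<^sub>m l k) M4)) = k"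
proof -
  have "diag_mat ((- c) \<cdot>\<^sub>m 1\<^sub>m k) = replicate k (- c)"
    by (intro nth_equalityI) (auto simp: diag_mat_def)
  then have "char_poly ((- c) \<cdot>\<^sub>m 1\<^sub>m k) = [:c, 1:] ^ k"
    by (subst char_poly_upper_triangular[of _ k]) (auto simp: upper_triangular_def)
  moreover have "poly (char_poly M4) (- c) \<noteq> 0"
    using assms eigenvalue_root_char_poly by blast
  moreover have "order (- c) ([:c, 1:] ^ k) = k"
    using order_power_n_n[of "- c" k] by simp
  moreover from \<open>poly (char_poly M4) (- c) \<noteq> 0\<close> have "char_poly M4 \<noteq> 0"
    by auto
  ultimately show ?thesis
    using assms by (auto simp: char_poly_four_block_mat_lower_left_zero order_mult order_0I)
qed

text \<open>In \<open>M = P\<^sup>-\<^sup>1 A P\<close> the first \<open>k\<close> columns are \<open>-c e\<^sub>t\<close>. A Jordan chain of \<open>-c\<close> in the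
  lower right block would give a vector \<open>v\<close> with \<open>(A + c I)\<^sup>2 v = 0 \<noteq> (A + c I) v\<close>, which the
  symmetry of \<open>A + c I\<close> rules out.\<close>

locale symmetric_eigenbasis =
  fixes A P :: "real mat" and c :: real and N k :: nat
  assumes A_carrier: "A \<in> carrier_mat N N"
    and symmetric: "transpose_mat (A + c \<cdot>\<^sub>m 1\<^sub>m N) = A + c \<cdot>\<^sub>m 1\<^sub>m N"
    and P_carrier: "P \<in> carrier_mat N N" and det_P: "det P \<noteq> 0" and k_le: "k \<le> N"
    and eigen_cols: "\<And>t. t < k \<Longrightarrow> A *\<^sub>v col P t = (- c) \<cdot>\<^sub>v col P t"
    and complement: "\<And>u. u \<in> carrier_vec N \<Longrightarrow> (\<And>t. t < k \<Longrightarrow> u $ t = 0)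
      \<Longrightarrow> (A + c \<cdot>\<^sub>m 1\<^sub>m N) *\<^sub>v (P *\<^sub>v u) = 0\<^sub>v N \<Longrightarrow> u = 0\<^sub>v N"
begin

definition Q :: "real mat" where
  "Q = (SOME Q. Q \<in> carrier_mat N N \<and> Q * P = 1\<^sub>m N \<and> P * Q = 1\<^sub>m N)"

lemma Q: "Q \<in> carrier_mat N N" "Q * P = 1\<^sub>m N" "P * Q = 1\<^sub>m N"
proof -
  have "P \<in> Units (ring_mat TYPE(real) N ())"
    by (rule det_non_zero_imp_unit[OF P_carrier det_P])
  then have "\<exists>Q. Q \<in> carrier_mat N N \<and> Q * P = 1\<^sub>m N \<and> P * Q = 1\<^sub>m N"
    by (auto simp: Units_def ring_mat_def)
  from someI_ex[OF this] show "Q \<in> carrier_mat N N" "Q * P = 1\<^sub>m N" "P * Q = 1\<^sub>m N"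
    by (auto simp: Q_def)
qed

definition M :: "real mat" where
  "M = Q * A * P"

lemma M_carrier: "M \<in> carrier_mat N N"
  using Q A_carrier P_carrier by (simp add: M_def)

lemma P_M: "P * M = A * P"
proof -
  have "P * M = P * ((Q * A) * P)"
    by (simp add: M_def)
  also have "\<dots> = (P * (Q * A)) * P"
    using Q A_carrier P_carrier by (intro assoc_mult_mat[symmetric, of _ N N _ N _ N]) auto
  also have "P * (Q * A) = (P * Q) * A"
    using Q A_carrier P_carrier by (intro assoc_mult_mat[symmetric, of _ N N _ N _ N]) auto
  finally show ?thesis
    using Q A_carrier by simp
qed

lemma similar_mat_M: "similar_mat A M"
proof (rule similar_matI)
  have "P * M * Q = A * (P * Q)"
    using P_M A_carrier P_carrier Q by (simp add: assoc_mult_mat[of _ N N _ N _ N])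
  then show "A = P * M * Q"
    using Q A_carrier by simp
qed (use Q M_carrier A_carrier P_carrier in auto)

lemma M_first_cols:
  assumes t: "t < k" and i: "i < N"
  shows "M $$ (i, t) = (if i = t then - c else 0)"
proof -
  have tN: "t < N"
    using t k_le by simp
  have "col M t = col (Q * (A * P)) t"
    using Q A_carrier P_carrier by (simp add: M_def assoc_mult_mat[of _ N N _ N _ N])
  also have "\<dots> = Q *\<^sub>v col (A * P) t"
    using Q A_carrier P_carrier tN by (intro col_mult2[of _ N N _ N]) auto
  also have "col (A * P) t = A *\<^sub>v col P t"
    using A_carrier P_carrier tN by (rule col_mult2)
  also have "Q *\<^sub>v (A *\<^sub>v col P t) = (- c) \<cdot>\<^sub>v (Q *\<^sub>v col P t)"
    using Q P_carrier tN by (simp add: eigen_cols[OF t] mult_mat_vec[of _ N N])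
  also have "Q *\<^sub>v col P t = col (Q * P) t"
    by (rule col_mult2[symmetric, OF Q(1) P_carrier tN])
  finally have "col M t = (- c) \<cdot>\<^sub>v unit_vec N t"
    using Q tN by simp
  then have "col M t $ i = (- c) * unit_vec N t $ i"
    using i by simp
  then show ?thesis
    using M_carrier i tN by (simp add: unit_vec_def)
qed

lemma shifted_A_mult_P:
  assumes x: "x \<in> carrier_vec N"
  shows "(A + c \<cdot>\<^sub>m 1\<^sub>m N) *\<^sub>v (P *\<^sub>v x) = P *\<^sub>v (M *\<^sub>v x + c \<cdot>\<^sub>v x)"
proof -
  have Px: "P *\<^sub>v x \<in> carrier_vec N"
    using P_carrier x by simp
  have "(A + c \<cdot>\<^sub>m 1\<^sub>m N) *\<^sub>v (P *\<^sub>v x) = A *\<^sub>v (P *\<^sub>v x) + c \<cdot>\<^sub>v (P *\<^sub>v x)"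
    using A_carrier Px by (simp add: add_mult_distrib_mat_vec[of _ N N] smult_one_mat_mult_vec)
  also have "A *\<^sub>v (P *\<^sub>v x) = (P * M) *\<^sub>v x"
    using A_carrier P_carrier x by (simp add: P_M)
  also have "\<dots> = P *\<^sub>v (M *\<^sub>v x)"
    using P_carrier M_carrier x by simp
  also have "c \<cdot>\<^sub>v (P *\<^sub>v x) = P *\<^sub>v (c \<cdot>\<^sub>v x)"
    using P_carrier x by (simp add: mult_mat_vec[of _ N N])
  also have "P *\<^sub>v (M *\<^sub>v x) + P *\<^sub>v (c \<cdot>\<^sub>v x) = P *\<^sub>v (M *\<^sub>v x + c \<cdot>\<^sub>v x)"
    using P_carrier M_carrier x by (simp add: mult_add_distrib_mat_vec[of _ N N])
  finally show ?thesis .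
qed

lemma shifted_M_first_coords:
  assumes y: "y \<in> carrier_vec N" and y0: "\<And>i. k \<le> i \<Longrightarrow> i < N \<Longrightarrow> y $ i = 0"
  shows "M *\<^sub>v y + c \<cdot>\<^sub>v y = 0\<^sub>v N"
proof (rule eq_vecI)
  fix i
  assume "i < dim_vec (0\<^sub>v N)"
  then have i: "i < N" by simp
  have "(M *\<^sub>v y) $ i = (\<Sum>t<k. M $$ (i, t) * y $ t) + (\<Sum>r<N - k. M $$ (i, k + r) * y $ (k + r))"
    using M_carrier y i by (simp add: scalar_prod_def sum_lessThan_split_at[OF k_le])
  also have "(\<Sum>r<N - k. M $$ (i, k + r) * y $ (k + r)) = 0"
    using y0 by simp
  also have "(\<Sum>t<k. M $$ (i, t) * y $ t) = (\<Sum>t<k. if i = t then - c * y $ t else 0)"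
    by (rule sum.cong) (use M_first_cols i in auto)
  also have "\<dots> = (if i < k then - c * y $ i else 0)"
    by simp
  finally show "(M *\<^sub>v y + c \<cdot>\<^sub>v y) $ i = 0\<^sub>v N $ i"
    using i y y0[of i] M_carrier by auto
qed (use M_carrier y in simp)

lemma lower_block_no_eigenvalue:
  assumes M4: "M4 \<in> carrier_mat (N - k) (N - k)"
    and M4_entries: "\<And>i j. i < N - k \<Longrightarrow> j < N - k \<Longrightarrow> M4 $$ (i, j) = M $$ (i + k, j + k)"
  shows "\<not> eigenvalue M4 (- c)"
proof
  assume "eigenvalue M4 (- c)"
  then obtain v where v: "v \<in> carrier_vec (N - k)" "v \<noteq> 0\<^sub>v (N - k)" "M4 *\<^sub>v v = (- c) \<cdot>\<^sub>v v"
    using M4 by (auto simp: eigenvalue_def eigenvector_def)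
  define u where "u = vec N (\<lambda>i. if i < k then 0 else v $ (i - k))"
  have u: "u \<in> carrier_vec N"
    by (simp add: u_def)
  have Mu: "(M *\<^sub>v u) $ i = - c * u $ i" if i: "k \<le> i" "i < N" for i
  proof -
    have "(M *\<^sub>v u) $ i = (\<Sum>r<N - k. M4 $$ (i - k, r) * v $ r)"
      using M_carrier u i k_le
      by (auto simp: scalar_prod_def sum_lessThan_split_at[OF k_le] u_def M4_entries add.commute
          intro!: sum.cong)
    also have "\<dots> = (M4 *\<^sub>v v) $ (i - k)"
      using M4 v(1) i by (simp add: scalar_prod_def atLeast0LessThan)
    finally show ?thesis
      using v i by (simp add: u_def)
  qed
  have Pu: "P *\<^sub>v u \<in> carrier_vec N" and B: "A + c \<cdot>\<^sub>m 1\<^sub>m N \<in> carrier_mat N N"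
    using u P_carrier A_carrier by auto
  from Mu have "M *\<^sub>v (M *\<^sub>v u + c \<cdot>\<^sub>v u) + c \<cdot>\<^sub>v (M *\<^sub>v u + c \<cdot>\<^sub>v u) = 0\<^sub>v N"
    using u M_carrier by (intro shifted_M_first_coords) auto
  then have square: "(A + c \<cdot>\<^sub>m 1\<^sub>m N) *\<^sub>v ((A + c \<cdot>\<^sub>m 1\<^sub>m N) *\<^sub>v (P *\<^sub>v u)) = 0\<^sub>v N"
    using u M_carrier P_carrier by (simp add: shifted_A_mult_P mult_mat_vec_zero)
  have "(A + c \<cdot>\<^sub>m 1\<^sub>m N) *\<^sub>v (P *\<^sub>v u) = 0\<^sub>v N"
    using B symmetric Pu square by (rule symmetric_mat_kernel_square)
  moreover have "u $ t = 0" if "t < k" for t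
    using that k_le by (simp add: u_def)
  ultimately have u0: "u = 0\<^sub>v N"
    using complement[OF u] by blast
  have "v $ r = 0" if "r < N - k" for r
    using arg_cong[OF u0, of "\<lambda>w. w $ (k + r)"] that by (simp add: u_def)
  with v show False
    by (auto intro: eq_vecI)
qed

theorem order_char_poly: "order (- c) (char_poly A) = k"
proof -
  obtain M1 M2 M3 M4 where split: "split_block M k k = (M1, M2, M3, M4)"
    by (metis prod_cases4)
  have dims: "dim_row M = k + (N - k)" "dim_col M = k + (N - k)"
    using M_carrier k_le by auto
  note blocks = split_block[OF split dims]
  have entries: "M1 = mat k k (\<lambda>ij. M $$ ij)" "M3 = mat (N - k) k (\<lambda>(i, j). M $$ (i + k, j))"
    "M4 = mat (N - k) (N - k) (\<lambda>(i, j). M $$ (i + k, j + k))"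
    using split M_carrier by (auto simp: split_block_def Let_def)
  have "M1 = (- c) \<cdot>\<^sub>m 1\<^sub>m k" "M3 = 0\<^sub>m (N - k) k"
    using M_first_cols k_le by (auto simp: entries intro!: eq_matI)
  then have "char_poly A = char_poly (four_block_mat ((- c) \<cdot>\<^sub>m 1\<^sub>m k) M2 (0\<^sub>m (N - k) k) M4)"
    using char_poly_similar[OF similar_mat_M] blocks(5) by simp
  moreover have "\<not> eigenvalue M4 (- c)"
    using blocks(4) by (rule lower_block_no_eigenvalue) (simp add: entries(3))
  ultimately show ?thesis
    using blocks(2,4) by (simp add: order_char_poly_four_block_scalar)
qed

end

locale unitriangular_family =
  fixes N :: nat and J :: "nat set" and g :: "nat \<Rightarrow> real vec" and rank :: "nat \<Rightarrow> nat"
  assumes J_subset: "J \<subseteq> {..<N}"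
    and g_carrier: "\<And>j. j \<in> J \<Longrightarrow> g j \<in> carrier_vec N"
    and g_diagonal: "\<And>j. j \<in> J \<Longrightarrow> g j $ j = 1"
    and g_triangular: "\<And>j j'. j \<in> J \<Longrightarrow> j' \<in> J \<Longrightarrow> g j $ j' \<noteq> 0 \<Longrightarrow> j' = j \<or> rank j < rank j'"
begin

abbreviation "k \<equiv> card J"

definition js :: "nat list" where
  "js = sorted_list_of_set J"

definition os :: "nat list" where
  "os = sorted_list_of_set ({..<N} - J)"

definition P :: "real mat" where
  "P = mat N N (\<lambda>(i, t). if t < k then g (js ! t) $ i else if i = os ! (t - k) then 1 else 0)"

lemma finite_J: "finite J"
  using J_subset finite_subset by blast

lemma k_le: "k \<le> N"
  using card_mono[OF _ J_subset] by simp

lemma js: "length js = k" "distinct js" "set js = J"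
  using finite_J by (auto simp: js_def)

lemma js_nth: "t < k \<Longrightarrow> js ! t \<in> J"
  using js nth_mem by metis

lemma os: "length os = N - k" "distinct os" "set os = {..<N} - J"
  using finite_J J_subset by (auto simp: os_def card_Diff_subset)

lemma os_nth: "r < N - k \<Longrightarrow> os ! r \<in> {..<N} - J"
  using os nth_mem by metis

lemma P_carrier: "P \<in> carrier_mat N N"
  by (simp add: P_def)

lemma col_P:
  assumes t: "t < k"
  shows "col P t = g (js ! t)"
proof -
  have "g (js ! t) \<in> carrier_vec N"
    using g_carrier js_nth t by blast
  then show ?thesis
    using t k_le by (intro eq_vecI) (auto simp: P_def)
qed

lemma P_mult_vec:
  assumes u: "u \<in> carrier_vec N" and i: "i < N"
  shows "(P *\<^sub>v u) $ i
       = (\<Sum>t<k. g (js ! t) $ i * u $ t) + (\<Sum>r<N - k. if i = os ! r then u $ (k + r) else 0)"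
proof -
  have "(P *\<^sub>v u) $ i = (\<Sum>t<k. P $$ (i, t) * u $ t) + (\<Sum>r<N - k. P $$ (i, k + r) * u $ (k + r))"
    using u i P_carrier by (simp add: scalar_prod_def sum_lessThan_split_at[OF k_le])
  then show ?thesis
    using i k_le by (auto simp: P_def intro!: sum.cong)
qed

lemma P_mult_vec_J:
  assumes u: "u \<in> carrier_vec N" and i: "i \<in> J"
  shows "(P *\<^sub>v u) $ i = (\<Sum>t<k. g (js ! t) $ i * u $ t)"
proof -
  have "(\<Sum>r<N - k. if i = os ! r then u $ (k + r) else 0) = 0"
    using i os_nth by (intro sum.neutral) auto
  moreover have "i < N"
    using i J_subset by auto
  ultimately show ?thesis
    using P_mult_vec[OF u] by simp
qed

lemma P_mult_vec_outside_J:
  assumes u: "u \<in> carrier_vec N" and r: "r < N - k"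
  shows "(P *\<^sub>v u) $ (os ! r) = (\<Sum>t<k. g (js ! t) $ (os ! r) * u $ t) + u $ (k + r)"
proof -
  have "(\<Sum>r'<N - k. if os ! r = os ! r' then u $ (k + r') else 0) = u $ (k + r)"
    using r nth_eq_iff_index_eq[OF os(2), of r] os(1) by (simp add: sum.delta' cong: if_cong)
  then show ?thesis
    using P_mult_vec[OF u, of "os ! r"] os_nth[OF r] by simp
qed

lemma P_mult_vec_J_eq_0_imp:
  assumes u: "u \<in> carrier_vec N" and zero: "\<And>i. i \<in> J \<Longrightarrow> (P *\<^sub>v u) $ i = 0"
  shows "\<And>t. t < k \<Longrightarrow> u $ t = 0"
proof (rule ccontr)
  fix t
  assume "t < k" "u $ t \<noteq> 0"
  then obtain t0 where t0: "t0 < k" "u $ t0 \<noteq> 0"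
    and min: "\<And>t'. t' < k \<Longrightarrow> u $ t' \<noteq> 0 \<Longrightarrow> rank (js ! t0) \<le> rank (js ! t')"
    using ex_has_least_nat[of "\<lambda>t. t < k \<and> u $ t \<noteq> 0" t "\<lambda>t. rank (js ! t)"] by blast
  have "g (js ! t') $ (js ! t0) * u $ t' = 0" if "t' < k" "t' \<noteq> t0" for t'
  proof (rule ccontr)
    assume "g (js ! t') $ (js ! t0) * u $ t' \<noteq> 0"
    then have "js ! t0 = js ! t' \<or> rank (js ! t') < rank (js ! t0)"
      using g_triangular[OF js_nth js_nth] that t0 by auto
    then show False
      using that t0 min[of t'] nth_eq_iff_index_eq[OF js(2)] js(1)
      by (metis \<open>g (js ! t') $ (js ! t0) * u $ t' \<noteq> 0\<close> mult_zero_right not_le)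
  qed
  then have "(\<Sum>t\<in>{..<k} - {t0}. g (js ! t) $ (js ! t0) * u $ t) = 0"
    by (intro sum.neutral) auto
  then have "(P *\<^sub>v u) $ (js ! t0) = g (js ! t0) $ (js ! t0) * u $ t0"
    using P_mult_vec_J[OF u js_nth[OF t0(1)]] t0(1) by (simp add: sum.remove[of _ t0])
  with zero[OF js_nth[OF t0(1)]] t0 g_diagonal[OF js_nth[OF t0(1)]] show False
    by simp
qed

lemma P_mult_vec_eq_0_imp:
  assumes u: "u \<in> carrier_vec N" and zero: "P *\<^sub>v u = 0\<^sub>v N"
  shows "u = 0\<^sub>v N"
proof -
  have low: "u $ t = 0" if "t < k" for t
    by (rule P_mult_vec_J_eq_0_imp[OF u _ that]) (use zero J_subset in auto)
  have "u $ (k + r) = 0" if r: "r < N - k" for r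
    using P_mult_vec_outside_J[OF u r] zero os_nth[OF r] low by simp
  then have "u $ i = 0" if "i < N" for i
    using that low by (metis add_diff_inverse_nat diff_less_mono not_less)
  then show ?thesis
    using u by (intro eq_vecI) auto
qed

lemma det_P: "det P \<noteq> 0"
  using det_0_iff_vec_prod_zero[OF P_carrier] P_mult_vec_eq_0_imp by blast

end

section \<open>The Gram decomposition of the adjacency matrix\<close>

definition on_line :: "nat \<Rightarrow> nat list \<Rightarrow> nat list \<times> nat \<Rightarrow> bool" where
  "on_line m x l \<longleftrightarrow> (\<exists>k<m. x = bump (fst l) (snd l) k)"

lemma lines_through_vertex:
  assumes x: "x \<in> sr_vertices m n"
  shows "{l \<in> sr_lines m n. on_line m x l}
       = (\<lambda>(k, s). (x[k := x ! k - s], s)) ` (SIGMA k:{..<m}. {1..x ! k})"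
proof (intro equalityI subsetI)
  have x_len: "length x = m" and x_sum: "sum_list x = n"
    using x by (auto simp: sr_vertices_def)
  fix l
  {
    assume "l \<in> {l \<in> sr_lines m n. on_line m x l}"
    then obtain z s k where l: "l = (z, s)" "1 \<le> s" "length z = m" "k < m" "x = bump z s k"
      by (cases l) (auto simp: sr_lines_def sr_vertices_def on_line_def)
    then have "(k, s) \<in> (SIGMA k:{..<m}. {1..x ! k})" "z = x[k := x ! k - s]"
      by (auto simp: bump_def)
    with l show "l \<in> (\<lambda>(k, s). (x[k := x ! k - s], s)) ` (SIGMA k:{..<m}. {1..x ! k})"
      by force
  next
    assume "l \<in> (\<lambda>(k, s). (x[k := x ! k - s], s)) ` (SIGMA k:{..<m}. {1..x ! k})"
    then obtain k s where l: "l = (x[k := x ! k - s], s)" "k < m" "1 \<le> s" "s \<le> x ! k"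
      by auto
    then have "s \<le> n"
      using nth_le_sum_list_sr_vertices[OF x] order_trans by blast
    moreover have "x[k := x ! k - s] \<in> sr_vertices m (n - s)"
      using l x_len by (simp add: sr_vertices_def sum_list_update_diff x_sum)
    moreover have "x = bump (x[k := x ! k - s]) s k"
      using l x_len by (simp add: bump_update_diff)
    ultimately show "l \<in> {l \<in> sr_lines m n. on_line m x l}"
      using l by (auto simp: sr_lines_def on_line_def)
  }
qed

lemma inj_on_lower_coordinate:
  fixes x :: "nat list"
  assumes x_len: "length x = m"
  shows "inj_on (\<lambda>(k, s). (x[k := x ! k - s], s)) (SIGMA k:{..<m}. {1..x ! k})"
proof (rule inj_onI)
  fix a b
  assume "a \<in> (SIGMA k:{..<m}. {1..x ! k})" "b \<in> (SIGMA k:{..<m}. {1..x ! k})"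
    "(\<lambda>(k, s). (x[k := x ! k - s], s)) a = (\<lambda>(k, s). (x[k := x ! k - s], s)) b"
  then obtain k k' s where ab: "a = (k, s)" "b = (k', s)" "k < m" "1 \<le> s" "s \<le> x ! k"
    and eq: "x[k := x ! k - s] = x[k' := x ! k' - s]"
    by (cases a; cases b) auto
  have "k = k'"
  proof (rule ccontr)
    assume "k \<noteq> k'"
    then have "x ! k - s = x ! k"
      using arg_cong[OF eq, of "\<lambda>v. v ! k"] x_len ab(3) by simp
    with ab show False
      by simp
  qed
  with ab show "a = b"
    by simp
qed

lemma card_lines_through_vertex:
  assumes x: "x \<in> sr_vertices m n"
  shows "card {l \<in> sr_lines m n. on_line m x l} = n"
proof -
  have x_len: "length x = m" and x_sum: "sum_list x = n"
    using x by (auto simp: sr_vertices_def)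
  have "card {l \<in> sr_lines m n. on_line m x l} = card (SIGMA k:{..<m}. {1..x ! k})"
    unfolding lines_through_vertex[OF x] by (rule card_image[OF inj_on_lower_coordinate[OF x_len]])
  also have "\<dots> = (\<Sum>k<m. x ! k)"
    by (simp add: card_SigmaI)
  finally show ?thesis
    using x_len x_sum by (simp add: sum_list_sum_nth atLeast0LessThan)
qed

lemma sum_list_eq_at_two_positions:
  fixes x y :: "nat list"
  assumes len: "length x = m" "length y = m" and ab: "a < m" "b < m" "a \<noteq> b"
    and others: "\<And>j. j < m \<Longrightarrow> j \<noteq> a \<Longrightarrow> j \<noteq> b \<Longrightarrow> x ! j = y ! j"
    and "sum_list x = sum_list y"
  shows "x ! a + x ! b = y ! a + y ! b"
proof -
  have split: "sum_list v = v ! a + v ! b + (\<Sum>j\<in>{..<m} - {a, b}. v ! j)" if "length v = m"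
    for v :: "nat list"
    using that ab
    by (simp add: sum_list_sum_nth atLeast0LessThan sum.remove[of _ a] sum.remove[of _ b]
        Diff_insert2[symmetric] insert_commute)
  have "(\<Sum>j\<in>{..<m} - {a, b}. x ! j) = (\<Sum>j\<in>{..<m} - {a, b}. y ! j)"
    using others by (intro sum.cong) auto
  then show ?thesis
    using split[OF len(1)] split[OF len(2)] assms(7) by simp
qed

lemma common_line_eq:
  assumes l: "(z, s) \<in> sr_lines m n" and on: "on_line m x (z, s)" "on_line m y (z, s)"
    and xy: "x \<noteq> y"
  shows "sr_adj m x y" "z = map2 min x y" "s = n - sum_list z"
proof -
  obtain k k' where k: "k < m" "k' < m" "x = bump z s k" "y = bump z s k'"
    using on by (auto simp: on_line_def)
  have z: "length z = m" "sum_list z = n - s" "1 \<le> s" "s \<le> n"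
    using l by (auto simp: sr_lines_def sr_vertices_def)
  have xj: "x ! j = (if j = k then z ! k + s else z ! j)"
    and yj: "y ! j = (if j = k' then z ! k' + s else z ! j)" for j
    using k z by (simp_all add: nth_bump)
  have "k \<noteq> k'"
    using k xy by auto
  then have "{j. j < m \<and> x ! j \<noteq> y ! j} = {k, k'}"
    using k(1,2) z by (auto simp: xj yj)
  with \<open>k \<noteq> k'\<close> show "sr_adj m x y"
    by (simp add: sr_adj_def)
  have "length x = m" "length y = m"
    using k z by simp_all
  then show "z = map2 min x y"
    using k(1,2) z \<open>k \<noteq> k'\<close> by (intro nth_equalityI) (auto simp: xj yj)
  show "s = n - sum_list z"
    using z by simp
qed

lemma sr_adjE:
  assumes x: "x \<in> sr_vertices m n" and y: "y \<in> sr_vertices m n" and adj: "sr_adj m x y"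
  obtains p q where "p < m" "q < m" "p \<noteq> q" "y ! p < x ! p" "x ! p + x ! q = y ! p + y ! q"
    "\<And>j. j < m \<Longrightarrow> j \<noteq> p \<Longrightarrow> j \<noteq> q \<Longrightarrow> x ! j = y ! j"
proof -
  have len: "length x = m" "length y = m" and sums: "sum_list x = n" "sum_list y = n"
    using x y by (auto simp: sr_vertices_def)
  obtain a b where ab: "{j. j < m \<and> x ! j \<noteq> y ! j} = {a, b}" "a \<noteq> b"
    using adj by (auto simp: sr_adj_def card_2_iff)
  then have ab_lt: "a < m" "b < m" "x ! a \<noteq> y ! a"
    and others: "\<And>j. j < m \<Longrightarrow> j \<noteq> a \<Longrightarrow> j \<noteq> b \<Longrightarrow> x ! j = y ! j"
    by blast+
  have sum_ab: "x ! a + x ! b = y ! a + y ! b"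
    using len ab_lt ab(2) others sums by (intro sum_list_eq_at_two_positions) auto
  show thesis
  proof (cases "y ! a < x ! a")
    case True
    with that[of a b] show thesis
      using ab_lt ab(2) sum_ab others by blast
  next
    case False
    with ab_lt sum_ab have "y ! b < x ! b"
      by linarith
    with that[of b a] show thesis
      using ab_lt ab(2) sum_ab others by (simp add: add.commute)
  qed
qed

lemma adjacent_on_common_line:
  assumes x: "x \<in> sr_vertices m n" and y: "y \<in> sr_vertices m n" and adj: "sr_adj m x y"
  defines "z \<equiv> map2 min x y"
  shows "(z, n - sum_list z) \<in> sr_lines m n \<and> on_line m x (z, n - sum_list z)
    \<and> on_line m y (z, n - sum_list z)"
proof -
  have len: "length x = m" "length y = m" and sums: "sum_list x = n" "sum_list y = n"
    using x y by (auto simp: sr_vertices_def)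
  obtain p q where pq: "p < m" "q < m" "p \<noteq> q" "y ! p < x ! p" "x ! p + x ! q = y ! p + y ! q"
    and out: "\<And>j. j < m \<Longrightarrow> j \<noteq> p \<Longrightarrow> j \<noteq> q \<Longrightarrow> x ! j = y ! j"
    using sr_adjE[OF x y adj] by blast
  define s where "s = x ! p - y ! p"
  have z_len: "length z = m"
    using len by (simp add: z_def)
  have z_nth: "z ! j = (if j = p then y ! p else x ! j)" if "j < m" for j
    using that len pq(4,5) out[of j] by (cases "j = p"; cases "j = q") (auto simp: z_def)
  have x_eq: "x = bump z s p"
    using len z_len pq(1,4) by (intro nth_equalityI) (auto simp: nth_bump z_nth s_def)
  have "y ! j = bump z s q ! j" if j: "j < m" for j
    using z_nth[OF j] out[OF j] z_len pq j by (cases "j = q") (auto simp: nth_bump s_def)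
  then have y_eq: "y = bump z s q"
    using len z_len by (intro nth_equalityI) auto
  have "sum_list z + s = n"
    using sum_list_bump[of p z s] pq(1) z_len x_eq sums by simp
  moreover have "1 \<le> s"
    using pq(4) by (simp add: s_def)
  ultimately have "(z, s) \<in> sr_lines m n"
    using z_len by (auto simp: sr_lines_def sr_vertices_def)
  moreover have "on_line m x (z, s)" "on_line m y (z, s)"
    using x_eq y_eq pq(1,2) unfolding on_line_def by auto
  moreover have "n - sum_list z = s"
    using \<open>sum_list z + s = n\<close> by simp
  ultimately show ?thesis
    by simp
qed

lemma card_lines_through_two_vertices:
  assumes x: "x \<in> sr_vertices m n" and y: "y \<in> sr_vertices m n" and xy: "x \<noteq> y"
  shows "card {l \<in> sr_lines m n. on_line m x l \<and> on_line m y l} = (if sr_adj m x y then 1 else 0)"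
proof -
  let ?z = "map2 min x y"
  show ?thesis
  proof (cases "sr_adj m x y")
    case True
    have "{l \<in> sr_lines m n. on_line m x l \<and> on_line m y l} = {(?z, n - sum_list ?z)}"
    proof (intro equalityI subsetI)
      fix l
      assume "l \<in> {l \<in> sr_lines m n. on_line m x l \<and> on_line m y l}"
      with common_line_eq[OF _ _ _ xy, of "fst l" "snd l"] show "l \<in> {(?z, n - sum_list ?z)}"
        by (cases l) auto
    qed (use adjacent_on_common_line[OF x y True] in auto)
    with True show ?thesis
      by simp
  next
    case False
    have "\<not> (l \<in> sr_lines m n \<and> on_line m x l \<and> on_line m y l)" for l
      using False common_line_eq(1)[OF _ _ _ xy, of "fst l" "snd l"] by auto
    then have "{l \<in> sr_lines m n. on_line m x l \<and> on_line m y l} = {}"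
      by blast
    with False show ?thesis
      by (simp only: card.empty if_False)
  qed
qed

definition sr_line_list :: "nat \<Rightarrow> nat \<Rightarrow> (nat list \<times> nat) list" where
  "sr_line_list m n = concat (map (\<lambda>s. map (\<lambda>z. (z, s)) (sr_vertex_list m (n - s))) [1..<Suc n])"

lemma set_sr_line_list: "set (sr_line_list m n) = sr_lines m n"
  by (auto simp: sr_line_list_def sr_lines_def set_sr_vertex_list)

lemma distinct_sr_line_list: "distinct (sr_line_list m n)"
  unfolding sr_line_list_def
  by (rule distinct_concat_map) (auto simp: distinct_map distinct_sr_vertex_list inj_on_def)

definition sr_incidence_mat :: "nat \<Rightarrow> nat \<Rightarrow> real mat" where
  "sr_incidence_mat m n = mat (length (sr_vertex_list m n)) (length (sr_line_list m n))
     (\<lambda>(i, l). if on_line m (sr_vertex_list m n ! i) (sr_line_list m n ! l) then 1 else 0)"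

lemma sr_incidence_mat_carrier:
  "sr_incidence_mat m n \<in> carrier_mat (length (sr_vertex_list m n)) (length (sr_line_list m n))"
  by (simp add: sr_incidence_mat_def)

lemma sr_adj_matrix_carrier:
  "sr_adj_matrix m n \<in> carrier_mat (length (sr_vertex_list m n)) (length (sr_vertex_list m n))"
  by (simp add: sr_adj_matrix_def Let_def)

lemma sum_indicator_nth:
  assumes "distinct xs"
  shows "(\<Sum>l\<in>{0..<length xs}. if P (xs ! l) then 1 else 0 :: real) = card {c \<in> set xs. P c}"
proof -
  have "(\<Sum>l\<in>{0..<length xs}. if P (xs ! l) then 1 else 0 :: real)
      = (\<Sum>c\<in>set xs. if P c then 1 else 0)"
    using assms by (simp add: sum.distinct_set_conv_list sum_list_sum_nth)
  then show ?thesis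
    by (simp add: sum.If_cases Int_def)
qed

theorem sr_adj_matrix_gram:
  "sr_adj_matrix m n + real n \<cdot>\<^sub>m 1\<^sub>m (length (sr_vertex_list m n))
     = sr_incidence_mat m n * transpose_mat (sr_incidence_mat m n)"
proof (rule eq_matI)
  let ?vs = "sr_vertex_list m n" and ?ls = "sr_line_list m n" and ?N = "sr_incidence_mat m n"
  fix i j
  assume "i < dim_row (?N * transpose_mat ?N)" "j < dim_col (?N * transpose_mat ?N)"
  then have i: "i < length ?vs" and j: "j < length ?vs"
    by (auto simp: sr_incidence_mat_def)
  have "(?N * transpose_mat ?N) $$ (i, j) = (\<Sum>l\<in>{0..<length ?ls}.
      if on_line m (?vs ! i) (?ls ! l) \<and> on_line m (?vs ! j) (?ls ! l) then 1 else 0)"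
    using i j by (auto simp: scalar_prod_def sr_incidence_mat_def intro!: sum.cong)
  also have "\<dots> = card {l \<in> sr_lines m n. on_line m (?vs ! i) l \<and> on_line m (?vs ! j) l}"
    using sum_indicator_nth[OF distinct_sr_line_list,
        of "\<lambda>l. on_line m (?vs ! i) l \<and> on_line m (?vs ! j) l"]
    by (simp add: set_sr_line_list)
  also have "\<dots> = (sr_adj_matrix m n + real n \<cdot>\<^sub>m 1\<^sub>m (length ?vs)) $$ (i, j)"
    using i j sr_vertex_list_nth_in_sr_vertices[OF i] sr_vertex_list_nth_in_sr_vertices[OF j]
      nth_eq_iff_index_eq[OF distinct_sr_vertex_list i j]
    by (cases "i = j")
      (auto simp: sr_adj_matrix_def Let_def card_lines_through_vertex
        card_lines_through_two_vertices sr_adj_def)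
  finally show "(sr_adj_matrix m n + real n \<cdot>\<^sub>m 1\<^sub>m (length ?vs)) $$ (i, j)
      = (?N * transpose_mat ?N) $$ (i, j)" ..
qed (auto simp: sr_incidence_mat_def sr_adj_matrix_def Let_def)

section \<open>The eigenspace of \<open>-n\<close>\<close>

definition vertex_index :: "nat \<Rightarrow> nat \<Rightarrow> nat list \<Rightarrow> nat" where
  "vertex_index m n = the_inv_into {..<length (sr_vertex_list m n)} ((!) (sr_vertex_list m n))"

lemma vertex_index_nth:
  "i < length (sr_vertex_list m n) \<Longrightarrow> vertex_index m n (sr_vertex_list m n ! i) = i"
  unfolding vertex_index_def
  by (rule the_inv_into_f_f) (auto intro: inj_on_nth distinct_sr_vertex_list)

lemma nth_vertex_index:
  assumes "x \<in> sr_vertices m n"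
  shows "vertex_index m n x < length (sr_vertex_list m n)"
    "sr_vertex_list m n ! vertex_index m n x = x"
proof -
  obtain i where "i < length (sr_vertex_list m n)" "sr_vertex_list m n ! i = x"
    using assms by (auto simp: set_sr_vertex_list[symmetric] in_set_conv_nth)
  then show "vertex_index m n x < length (sr_vertex_list m n)"
    "sr_vertex_list m n ! vertex_index m n x = x"
    by (auto simp: vertex_index_nth)
qed

definition vertex_vec :: "nat \<Rightarrow> nat \<Rightarrow> (nat list \<Rightarrow> real) \<Rightarrow> real vec" where
  "vertex_vec m n f = vec (length (sr_vertex_list m n)) (\<lambda>i. f (sr_vertex_list m n ! i))"

lemma transpose_sr_incidence_mat_mult_vec:
  assumes w: "w \<in> carrier_vec (length (sr_vertex_list m n))"
    and l: "l < length (sr_line_list m n)" "sr_line_list m n ! l = (z, s)"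
  shows "(transpose_mat (sr_incidence_mat m n) *\<^sub>v w) $ l
       = (\<Sum>k<m. w $ vertex_index m n (bump z s k))"
proof -
  let ?vs = "sr_vertex_list m n" and ?idx = "\<lambda>k. vertex_index m n (bump z s k)"
  have zs: "(z, s) \<in> sr_lines m n"
    using l nth_mem set_sr_line_list by metis
  then have bump_in: "bump z s k \<in> sr_vertices m n" if "k < m" for k
    using that by (auto simp: sr_lines_def intro: bump_in_sr_vertices)
  have "{i \<in> {0..<length ?vs}. on_line m (?vs ! i) (z, s)} = ?idx ` {..<m}"
    using bump_in nth_vertex_index vertex_index_nth by (fastforce simp: on_line_def)
  moreover have "inj_on ?idx {..<m}"
  proof (rule inj_onI)
    fix a b
    assume "a \<in> {..<m}" "b \<in> {..<m}" "?idx a = ?idx b"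
    then have "bump z s a = bump z s b"
      using nth_vertex_index(2)[OF bump_in] by (metis lessThan_iff)
    then have "bump z s a ! a = bump z s b ! a"
      by simp
    then show "a = b"
      using zs \<open>a \<in> {..<m}\<close> \<open>b \<in> {..<m}\<close>
      by (auto simp: sr_lines_def sr_vertices_def nth_bump split: if_splits)
  qed
  ultimately have "(\<Sum>i\<in>{0..<length ?vs}. if on_line m (?vs ! i) (z, s) then w $ i else 0)
      = (\<Sum>k<m. w $ ?idx k)"
    by (simp add: sum.inter_filter[symmetric] sum.reindex)
  moreover have "(transpose_mat (sr_incidence_mat m n) *\<^sub>v w) $ l
      = (\<Sum>i\<in>{0..<length ?vs}. (if on_line m (?vs ! i) (z, s) then 1 else 0) * w $ i)"
    using w l by (simp add: scalar_prod_def sr_incidence_mat_def)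
  moreover have "(\<Sum>i\<in>{0..<length ?vs}. (if on_line m (?vs ! i) (z, s) then 1 else 0) * w $ i)
      = (\<Sum>i\<in>{0..<length ?vs}. if on_line m (?vs ! i) (z, s) then w $ i else 0)"
    by (rule sum.cong) auto
  ultimately show ?thesis
    by simp
qed

lemma zero_sum_on_lines_imp_kernel:
  assumes f: "zero_sum_on_lines m n f"
  shows "(sr_adj_matrix m n + real n \<cdot>\<^sub>m 1\<^sub>m (length (sr_vertex_list m n))) *\<^sub>v vertex_vec m n f
       = 0\<^sub>v (length (sr_vertex_list m n))"
proof -
  let ?N = "sr_incidence_mat m n"
  have "transpose_mat ?N *\<^sub>v vertex_vec m n f = 0\<^sub>v (length (sr_line_list m n))"
  proof (rule eq_vecI)
    fix l
    assume "l < dim_vec (0\<^sub>v (length (sr_line_list m n)))"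
    then have l: "l < length (sr_line_list m n)"
      by simp
    obtain z s where zs: "sr_line_list m n ! l = (z, s)"
      by fastforce
    then have "(z, s) \<in> sr_lines m n"
      using l nth_mem set_sr_line_list by metis
    with f have "(\<Sum>k<m. f (bump z s k)) = 0"
      by (auto simp: zero_sum_on_lines_def)
    moreover have "vertex_vec m n f $ vertex_index m n (bump z s k) = f (bump z s k)" if "k < m" for k
    proof -
      have "bump z s k \<in> sr_vertices m n"
        using \<open>(z, s) \<in> sr_lines m n\<close> that by (auto simp: sr_lines_def intro: bump_in_sr_vertices)
      then show ?thesis
        using nth_vertex_index[of "bump z s k" m n] by (simp add: vertex_vec_def)
    qed
    ultimately show "(transpose_mat ?N *\<^sub>v vertex_vec m n f) $ l = 0\<^sub>v (length (sr_line_list m n)) $ l"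
      using l zs by (simp add: transpose_sr_incidence_mat_mult_vec vertex_vec_def)
  qed (simp add: sr_incidence_mat_def)
  then show ?thesis
    using sr_incidence_mat_carrier[of m n]
    by (simp add: mult_mat_vec_zero sr_adj_matrix_gram
        assoc_mult_mat_vec[of _ _ _ _ "length (sr_line_list m n)"]
        vertex_vec_def)
qed

lemma kernel_imp_zero_sum_on_lines:
  assumes w: "w \<in> carrier_vec (length (sr_vertex_list m n))"
    and ker: "(sr_adj_matrix m n + real n \<cdot>\<^sub>m 1\<^sub>m (length (sr_vertex_list m n))) *\<^sub>v w
      = 0\<^sub>v (length (sr_vertex_list m n))"
  shows "zero_sum_on_lines m n (\<lambda>x. w $ vertex_index m n x)"
proof -
  let ?N = "sr_incidence_mat m n"
  define u where "u = transpose_mat ?N *\<^sub>v w"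
  have u: "u \<in> carrier_vec (length (sr_line_list m n))"
    unfolding u_def using sr_incidence_mat_carrier[of m n] w
    by (intro mult_mat_vec_carrier[of _ _ "length (sr_vertex_list m n)"]) auto
  have "u \<bullet> u = w \<bullet> (?N *\<^sub>v u)"
    unfolding u_def by (rule transpose_vec_mult_scalar[OF sr_incidence_mat_carrier _ w])
      (use u u_def in simp)
  also have "?N *\<^sub>v u = 0\<^sub>v (length (sr_vertex_list m n))"
    using ker sr_incidence_mat_carrier[of m n] w
    by (simp add: u_def sr_adj_matrix_gram
        assoc_mult_mat_vec[symmetric, of _ _ _ _ "length (sr_line_list m n)"])
  finally have "u = 0\<^sub>v (length (sr_line_list m n))"
    using u w by (simp add: scalar_prod_self_eq_0_iff)
  then show ?thesis
    unfolding zero_sum_on_lines_def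
    using transpose_sr_incidence_mat_mult_vec[OF w]
    by (auto simp: u_def in_set_conv_nth set_sr_line_list[symmetric])
qed

definition lehmer_code_positions :: "nat \<Rightarrow> nat \<Rightarrow> nat set" where
  "lehmer_code_positions m n =
     {i. i < length (sr_vertex_list m n) \<and> sr_vertex_list m n ! i \<in> lehmer_codes m n}"

lemma vertex_index_in_lehmer_code_positions:
  assumes "a \<in> lehmer_codes m n"
  shows "vertex_index m n a \<in> lehmer_code_positions m n"
proof -
  have "a \<in> sr_vertices m n"
    using assms lehmer_codes_subset by blast
  then show ?thesis
    using assms nth_vertex_index[of a m n] by (simp add: lehmer_code_positions_def)
qed

lemma card_lehmer_code_positions: "card (lehmer_code_positions m n) = card (lehmer_codes m n)"
proof -
  have "lehmer_codes m n = (!) (sr_vertex_list m n) ` lehmer_code_positions m n"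
  proof (intro equalityI subsetI)
    fix a
    assume a: "a \<in> lehmer_codes m n"
    then have "sr_vertex_list m n ! vertex_index m n a = a"
      using nth_vertex_index lehmer_codes_subset by blast
    with vertex_index_in_lehmer_code_positions[OF a]
    show "a \<in> (!) (sr_vertex_list m n) ` lehmer_code_positions m n"
      by (metis image_eqI)
  qed (auto simp: lehmer_code_positions_def)
  moreover have "inj_on ((!) (sr_vertex_list m n)) (lehmer_code_positions m n)"
    by (rule inj_on_nth[OF distinct_sr_vertex_list]) (auto simp: lehmer_code_positions_def)
  ultimately show ?thesis
    by (simp add: card_image)
qed

definition alternant_vec :: "nat \<Rightarrow> nat \<Rightarrow> nat \<Rightarrow> real vec" where
  "alternant_vec m n i = vertex_vec m n (alternant m (sr_vertex_list m n ! i))"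

lemma unitriangular_family_alternant_vec:
  "unitriangular_family (length (sr_vertex_list m n)) (lehmer_code_positions m n) (alternant_vec m n)
     (\<lambda>i. horner_sum id (Suc n) (sr_vertex_list m n ! i))"
proof
  let ?vs = "sr_vertex_list m n"
  fix j j'
  assume j: "j \<in> lehmer_code_positions m n" and j': "j' \<in> lehmer_code_positions m n"
    and "alternant_vec m n j $ j' \<noteq> 0"
  then have "?vs ! j' = ?vs ! j \<or> horner_sum id (Suc n) (?vs ! j) < horner_sum id (Suc n) (?vs ! j')"
    using sr_vertex_list_nth_in_sr_vertices[of j m n] sr_vertex_list_nth_in_sr_vertices[of j' m n]
    by (intro alternant_triangular)
      (auto simp: lehmer_code_positions_def alternant_vec_def vertex_vec_def sr_vertices_def)
  then show "j' = j \<or> horner_sum id (Suc n) (?vs ! j) < horner_sum id (Suc n) (?vs ! j')"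
    using j j' nth_eq_iff_index_eq[OF distinct_sr_vertex_list] by (auto simp: lehmer_code_positions_def)
qed (auto simp: lehmer_code_positions_def alternant_vec_def vertex_vec_def alternant_diagonal)

lemma kernel_alternant_vec:
  "j \<in> lehmer_code_positions m n \<Longrightarrow>
    (sr_adj_matrix m n + real n \<cdot>\<^sub>m 1\<^sub>m (length (sr_vertex_list m n))) *\<^sub>v alternant_vec m n j
      = 0\<^sub>v (length (sr_vertex_list m n))"
  by (auto simp: lehmer_code_positions_def alternant_vec_def
      intro: zero_sum_on_lines_imp_kernel alternant_zero_sum_on_lines)

theorem eig_mult_sr_adj_matrix: "eig_mult (sr_adj_matrix m n) (- real n) = card (lehmer_codes m n)"
proof -
  let ?vs = "sr_vertex_list m n" and ?J = "lehmer_code_positions m n"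
  let ?A = "sr_adj_matrix m n" and ?B = "sr_adj_matrix m n + real n \<cdot>\<^sub>m 1\<^sub>m (length ?vs)"
  interpret family: unitriangular_family "length ?vs" ?J "alternant_vec m n"
    "\<lambda>i. horner_sum id (Suc n) (?vs ! i)"
    by (rule unitriangular_family_alternant_vec)
  interpret symmetric_eigenbasis ?A family.P "real n" "length ?vs" "card ?J"
  proof
    show "transpose_mat ?B = ?B"
      using sr_incidence_mat_carrier[of m n]
      by (simp add: sr_adj_matrix_gram transpose_mult[of _ _ "length (sr_line_list m n)"])
    show "?A *\<^sub>v col family.P t = (- real n) \<cdot>\<^sub>v col family.P t" if t: "t < card ?J" for t
      using eigenvector_if_shift_kernel[OF sr_adj_matrix_carrier family.g_carrier
          kernel_alternant_vec, OF family.js_nth[OF t] family.js_nth[OF t]]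
      by (simp add: family.col_P[OF t])
    fix u
    assume u: "u \<in> carrier_vec (length ?vs)" and low: "\<And>t. t < card ?J \<Longrightarrow> u $ t = 0"
      and ker: "?B *\<^sub>v (family.P *\<^sub>v u) = 0\<^sub>v (length ?vs)"
    have "(family.P *\<^sub>v u) $ vertex_index m n x = 0" if "x \<in> sr_vertices m n" for x
    proof (rule zero_sum_on_lines_eq_0[OF kernel_imp_zero_sum_on_lines[OF _ ker] _ that])
      show "(family.P *\<^sub>v u) $ vertex_index m n a = 0" if "a \<in> lehmer_codes m n" for a
        using family.P_mult_vec_J[OF u vertex_index_in_lehmer_code_positions[OF that]] low by simp
    qed (use family.P_carrier u in simp)
    then have "(family.P *\<^sub>v u) $ i = 0" if "i < length ?vs" for i
      using sr_vertex_list_nth_in_sr_vertices[OF that] vertex_index_nth[OF that] by metis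
    then have "family.P *\<^sub>v u = 0\<^sub>v (length ?vs)"
      using family.P_carrier by (intro eq_vecI) auto
    then show "u = 0\<^sub>v (length ?vs)"
      by (rule family.P_mult_vec_eq_0_imp[OF u])
  qed (auto simp: sr_adj_matrix_carrier family.P_carrier family.det_P family.k_le)
  show ?thesis
    using order_char_poly card_lehmer_code_positions by (simp add: eig_mult_def)
qed

theorem proposition4:
  fixes m n :: nat
  assumes "m \<ge> 1"
  shows "eig_mult (sr_adj_matrix m n) (- real n)
           = card {p. p permutes {..<m} \<and> inversions m p = n}
       \<and> card {p. p permutes {..<m} \<and> inversions m p = n}
           = coeff (\<Prod>i\<in>{2..m}. \<Sum>j<i. monom (1::nat) j) n"
  using card_permutations_with_inversions[of m n] eig_mult_sr_adj_matrix[of m n]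
    coeff_prod_geometric_polys[of m n]
  by (simp add: permutations_with_inversions_def)

end
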